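(* Let $f, g \in \mathrm{Inj}(\Omega)$ each have exactly one infinite cycle, and satisfy $(f)\mathrm{C}_n, (g)\mathrm{C}_n < \aleph_0$ for all $n \in \mathbb{Z}_+$. Then $f \approx_{\mathrm{even}} g$ if and only if $f = hh_1gh_2h^{-1}$ for some $h \in \mathrm{Sym}(\Omega)$ and $h_1, h_2 \in \mathrm{Alt}(\Omega)$.
   Context: $\Omega$ is a countably infinite set; maps are written on the right and composed left to right. $\mathrm{Inj}(\Omega)$ is the monoid of injective maps $\Omega\to\Omega$, $\mathrm{Sym}(\Omega)$ the permutation group, $\mathrm{Alt}(\Omega)$ the group of even permutations moving only finitely many points. For $f\in\mathrm{Inj}(\Omega)$, a cycle of $f$ is a nonempty $\Sigma\subseteq\Omega$ such that (a) for all $\alpha\in\Omega$, $(\alpha)f\in\Sigma$ iff $\alpha\in\Sigma$, and (b) no proper nonempty subset of $\Sigma$ satisfies (a). A forward cycle is an infinite cycle $\Sigma$ with $\Sigma\setminus(\Omega)f\ne\emptyset$; an open cycle is an infinite cycle that is not forward. $(f)\mathrm{C}_n$ ($n\in\mathbb{Z}_+$) is the cardinal number of cycles of cardinality $n$; $(f)\mathrm{C}_{\mathrm{open}}$, $(f)\mathrm{C}_{\mathrm{fwd}}$ the numbers of open and forward cycles. $f\approx_{\mathrm{fin}}g$ means: $(f)\mathrm{C}_{\mathrm{open}}=(g)\mathrm{C}_{\mathrm{open}}$; $(f)\mathrm{C}_{\mathrm{fwd}}=(g)\mathrm{C}_{\mathrm{fwd}}$; $(f)\mathrm{C}_n\ne(g)\mathrm{C}_n$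 for only finitely many $n$; and whenever $(f)\mathrm{C}_n\ne(g)\mathrm{C}_n$, both are finite. $f\approx_{\mathrm{even}} g$ means $f\approx_{\mathrm{fin}}g$ and $\sum_{n\in\mathbb{Z}_+}((f)\mathrm{C}_n-(g)\mathrm{C}_n)$ is an even integer, where a term is $0$ whenever $(f)\mathrm{C}_n=(g)\mathrm{C}_n$ (even if infinite). *)

theory Defs
  imports "HOL-Combinatorics.Permutations" "HOL-Library.Extended_Nat" "HOL-Library.Countable"
begin

(* Maps are applied as ordinary functions; the paper's right-action product
   h h1 g h2 h^{-1} (left to right) becomes  inv h \<circ> h2 \<circ> g \<circ> h1 \<circ> h. *)

definition closed_under :: "('a \<Rightarrow> 'a) \<Rightarrow> 'a set \<Rightarrow> bool" where
  "closed_under f S \<longleftrightarrow> (\<forall>a. f a \<in> S \<longleftrightarrow> a \<in> S)"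

definition cycles :: "('a \<Rightarrow> 'a) \<Rightarrow> 'a set set" where
  "cycles f = {S. S \<noteq> {} \<and> closed_under f S \<and>
                  (\<forall>T. T \<subseteq> S \<and> T \<noteq> {} \<and> T \<noteq> S \<longrightarrow> \<not> closed_under f T)}"

(* cardinal number of a set of cycles; on a countable ground set this is at most aleph_0 *)
definition ecard :: "'b set \<Rightarrow> enat" where
  "ecard A = (if finite A then enat (card A) else \<infinity>)"

definition Cn :: "nat \<Rightarrow> ('a \<Rightarrow> 'a) \<Rightarrow> enat" where
  "Cn n f = ecard {S \<in> cycles f. finite S \<and> card S = n}"

definition fwd_cycles :: "('a \<Rightarrow> 'a) \<Rightarrow> 'a set set" where
  "fwd_cycles f = {S \<in> cycles f. infinite S \<and> S - range f \<noteq> {}}"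

definition open_cycles :: "('a \<Rightarrow> 'a) \<Rightarrow> 'a set set" where
  "open_cycles f = {S \<in> cycles f. infinite S \<and> \<not> (S - range f \<noteq> {})}"

definition C_open :: "('a \<Rightarrow> 'a) \<Rightarrow> enat" where
  "C_open f = ecard (open_cycles f)"

definition C_fwd :: "('a \<Rightarrow> 'a) \<Rightarrow> enat" where
  "C_fwd f = ecard (fwd_cycles f)"

definition approx_fin :: "('a \<Rightarrow> 'a) \<Rightarrow> ('a \<Rightarrow> 'a) \<Rightarrow> bool" where
  "approx_fin f g \<longleftrightarrow>
     C_open f = C_open g \<and> C_fwd f = C_fwd g \<and>
     finite {n. 0 < n \<and> Cn n f \<noteq> Cn n g} \<and>
     (\<forall>n>0. Cn n f \<noteq> Cn n g \<longrightarrow> Cn n f \<noteq> \<infinity> \<and> Cn n g \<noteq> \<infinity>)"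

definition approx_even :: "('a \<Rightarrow> 'a) \<Rightarrow> ('a \<Rightarrow> 'a) \<Rightarrow> bool" where
  "approx_even f g \<longleftrightarrow> approx_fin f g \<and>
     even (\<Sum>n\<in>{n. 0 < n \<and> Cn n f \<noteq> Cn n g}.
             int (the_enat (Cn n f)) - int (the_enat (Cn n g)))"

(* Alt(Omega): even permutations moving only finitely many points *)
definition Alt :: "('a \<Rightarrow> 'a) set" where
  "Alt = {p. permutation p \<and> evenperm p}"

end

theory Submission
  imports Defs
begin

(* For an injection, finite cycles are periodic orbits inside the range
   and infinite cycles have no repetitions.  The key computation is the effect of composing
   with a transposition (a b): the cycle of a is split into two if b lies on it, and the cycles
   of a and b are merged otherwise.  For admissible g this changes an odd number (1 or 3) of
   finite cycles and keeps the kind (forward or open) of the infinite cycle; by induction, an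
   even permutation of finite support changes an even number of finite cycles, which gives
   the backward direction together with the invariance of all cycle counts under conjugation.
   For the forward direction, cutting n-cycles off the infinite cycle or merging finite cycles
   into it brings the cycle counts of g to those of f with an even number of transpositions,
   and a conjugacy criterion (admissible maps with the same cycle counts and the same kind of
   infinite cycle are conjugate) finishes the proof. *)

section \<open>Cycles as orbit classes\<close>

(* The cycle of f through x: all points whose forward orbit meets that of x.  By
   cycles_eq_range_cycle_of these are exactly the cycles of the paper. *)
definition cycle_of :: "('a \<Rightarrow> 'a) \<Rightarrow> 'a \<Rightarrow> 'a set" where
  "cycle_of f x = {y. \<exists>m n. (f^^m) x = (f^^n) y}"

lemma funpow_in_cycle_of: "(f^^j) x \<in> cycle_of f x"
  unfolding cycle_of_def by (rule CollectI, rule exI[of _ j], rule exI[of _ 0]) simp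

lemma funpow_in_cycle_of': "(f^^j) y = x \<Longrightarrow> y \<in> cycle_of f x"
  unfolding cycle_of_def by (rule CollectI, rule exI[of _ 0], rule exI[of _ j]) simp

lemma cycle_of_self [simp]: "x \<in> cycle_of f x"
  using funpow_in_cycle_of[where j=0] by simp

lemma closed_under_funpow_iff: "closed_under f S \<Longrightarrow> (f^^m) x \<in> S \<longleftrightarrow> x \<in> S"
  by (induction m) (simp_all add: closed_under_def)

lemma cycle_of_minimal: "closed_under f S \<Longrightarrow> x \<in> S \<Longrightarrow> cycle_of f x \<subseteq> S"
proof
  fix y assume S: "closed_under f S" "x \<in> S" and "y \<in> cycle_of f x"
  then obtain m n where "(f^^m) x = (f^^n) y" unfolding cycle_of_def by blast
  moreover have "(f^^m) x \<in> S" using closed_under_funpow_iff[OF S(1)] S(2) by simp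
  ultimately show "y \<in> S" using closed_under_funpow_iff[OF S(1)] by simp
qed

lemma cycle_of_closed: "closed_under f (cycle_of f x)"
  unfolding closed_under_def cycle_of_def
proof (intro allI iffI; elim CollectE exE)
  fix a m n assume "(f^^m) x = (f^^n) (f a)"
  then have "(f^^m) x = (f^^Suc n) a" by (simp add: funpow_swap1)
  then show "a \<in> {y. \<exists>m n. (f^^m) x = (f^^n) y}" by blast
next
  fix a m n assume "(f^^m) x = (f^^n) a"
  then have "(f^^Suc m) x = (f^^n) (f a)" by (simp add: funpow_swap1)
  then show "f a \<in> {y. \<exists>m n. (f^^m) x = (f^^n) y}" by blast
qed

lemma cycle_of_sym: "y \<in> cycle_of f x \<Longrightarrow> x \<in> cycle_of f y"
  unfolding cycle_of_def by (auto dest: sym)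

lemma cycle_of_eq: "y \<in> cycle_of f x \<Longrightarrow> cycle_of f y = cycle_of f x"
  by (meson cycle_of_closed cycle_of_minimal cycle_of_sym subset_antisym)

lemma cycles_eq_range_cycle_of: "cycles f = range (cycle_of f)"
proof safe
  fix S assume S: "S \<in> cycles f"
  then obtain x where x: "x \<in> S" and closed: "closed_under f S"
    and minimal: "\<forall>T. T \<subseteq> S \<and> T \<noteq> {} \<and> T \<noteq> S \<longrightarrow> \<not> closed_under f T"
    unfolding cycles_def by auto
  have "cycle_of f x \<subseteq> S" using cycle_of_minimal[OF closed x] .
  then have "cycle_of f x = S" using minimal cycle_of_closed[of f x] cycle_of_self[of x f] by blast
  then show "S \<in> range (cycle_of f)" by blast
next
  fix x show "cycle_of f x \<in> cycles f"
    unfolding cycles_def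
  proof (intro CollectI conjI allI impI)
    show "cycle_of f x \<noteq> {}" using cycle_of_self[of x f] by blast
    show "closed_under f (cycle_of f x)" by (rule cycle_of_closed)
    fix T assume T: "T \<subseteq> cycle_of f x \<and> T \<noteq> {} \<and> T \<noteq> cycle_of f x"
    then obtain y where y: "y \<in> T" by auto
    show "\<not> closed_under f T"
    proof
      assume "closed_under f T"
      then have "cycle_of f y \<subseteq> T" using y by (rule cycle_of_minimal)
      moreover have "cycle_of f y = cycle_of f x" by (rule cycle_of_eq) (use y T in blast)
      ultimately show False using T by blast
    qed
  qed
qed

lemma cycle_of_in_cycles [simp]: "cycle_of f x \<in> cycles f"
  unfolding cycles_eq_range_cycle_of by blast

lemma cycle_eq_cycle_of: "S \<in> cycles f \<Longrightarrow> x \<in> S \<Longrightarrow> S = cycle_of f x"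
proof -
  assume "S \<in> cycles f" "x \<in> S"
  then obtain y where "S = cycle_of f y" unfolding cycles_eq_range_cycle_of by blast
  with \<open>x \<in> S\<close> show ?thesis using cycle_of_eq[of x f y] by simp
qed

lemma cycles_nonempty: "S \<in> cycles f \<Longrightarrow> S \<noteq> {}"
  unfolding cycles_def by blast

lemma closed_under_Un: "closed_under f S \<Longrightarrow> closed_under f T \<Longrightarrow> closed_under f (S \<union> T)"
  unfolding closed_under_def by blast

lemma cycle_subset_cycle_of:
  assumes "S \<in> cycles f" "S \<subseteq> cycle_of f a" shows "S = cycle_of f a"
proof -
  obtain x where x: "x \<in> S" using cycles_nonempty[OF assms(1)] by blast
  then have "cycle_of f x = cycle_of f a" by (intro cycle_of_eq) (use assms(2) in blast)
  then show ?thesis using cycle_eq_cycle_of[OF assms(1) x] by simp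
qed

section \<open>Cycles of injections\<close>

lemma funpow_cancel:
  fixes f :: "'a \<Rightarrow> 'a"
  assumes "inj f" "(f^^n) x = (f^^n) y" shows "x = y"
  using inj_fn[OF assms(1), of n] assms(2) unfolding inj_def by blast

lemma funpow_eq_imp_period:
  assumes "inj f" "i \<le> j" "(f^^i) x = (f^^j) x" shows "(f^^(j - i)) x = x"
proof -
  have "(f^^i) ((f^^(j - i)) x) = (f^^i) x"
    using assms(2,3) by (metis funpow_add le_add_diff_inverse comp_apply)
  then show ?thesis using funpow_cancel[OF assms(1)] by blast
qed

lemma cycle_of_inj_cases:
  assumes "inj f" "y \<in> cycle_of f x"
  shows "(\<exists>j. y = (f^^j) x) \<or> (\<exists>j. (f^^j) y = x)"
proof -
  obtain m n where e: "(f^^m) x = (f^^n) y" using assms(2) unfolding cycle_of_def by blast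
  show ?thesis
  proof (cases "n \<le> m")
    case True
    then have "(f^^n) ((f^^(m - n)) x) = (f^^n) y" using e by (metis funpow_add le_add_diff_inverse comp_apply)
    then show ?thesis using funpow_cancel[OF assms(1)] by blast
  next
    case False
    then have "(f^^m) ((f^^(n - m)) y) = (f^^m) x" using e by (metis funpow_add le_add_diff_inverse nat_le_linear comp_apply)
    then show ?thesis using funpow_cancel[OF assms(1)] by blast
  qed
qed

lemma finite_cycle_has_period:
  assumes "inj f" "finite (cycle_of f x)" shows "\<exists>p>0. (f^^p) x = x"
proof -
  have "{y. \<exists>n. y = (f^^n) x} \<subseteq> cycle_of f x" by (auto simp: funpow_in_cycle_of)
  then show ?thesis using funpow_inj_finite[OF assms(1)] assms(2) finite_subset by metis
qed

lemma cycle_of_periodic: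
  assumes "inj f" "0 < p" "(f^^p) x = x"
  shows "cycle_of f x = (\<lambda>i. (f^^i) x) ` {..<p}"
proof
  show "(\<lambda>i. (f^^i) x) ` {..<p} \<subseteq> cycle_of f x" by (auto simp: funpow_in_cycle_of)
  show "cycle_of f x \<subseteq> (\<lambda>i. (f^^i) x) ` {..<p}"
  proof
    fix y assume "y \<in> cycle_of f x"
    then obtain m n where e: "(f^^m) x = (f^^n) y" unfolding cycle_of_def by blast
    define k where "k = m + n * p - n"
    have "n \<le> n * p" using assms(2) by simp
    then have "n + k = m + n * p" unfolding k_def by linarith
    then have "(f^^n) ((f^^k) x) = (f^^(m + n * p)) x" by (metis funpow_add comp_apply)
    also have "\<dots> = (f^^m) x" using funpow_mod_eq[OF assms(3)] by (metis mod_mult_self1)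
    finally have "y = (f^^k) x" using e funpow_cancel[OF assms(1)] by metis
    then have "y = (f^^(k mod p)) x" using funpow_mod_eq[OF assms(3)] by simp
    then show "y \<in> (\<lambda>i. (f^^i) x) ` {..<p}" using assms(2) by auto
  qed
qed

definition period :: "('a \<Rightarrow> 'a) \<Rightarrow> 'a \<Rightarrow> nat" where
  "period f x = (LEAST p. 0 < p \<and> (f^^p) x = x)"

lemma period:
  assumes "inj f" "finite (cycle_of f x)"
  shows "0 < period f x" and "(f^^period f x) x = x"
proof -
  obtain p where "0 < p \<and> (f^^p) x = x" using finite_cycle_has_period[OF assms] by blast
  then have "0 < period f x \<and> (f^^period f x) x = x" unfolding period_def by (rule LeastI)
  then show "0 < period f x" "(f^^period f x) x = x" by auto
qed

lemma period_least: "0 < i \<Longrightarrow> i < period f x \<Longrightarrow> (f^^i) x \<noteq> x"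
  unfolding period_def using not_less_Least by blast

lemma funpow_eq_iff_mod_period:
  assumes "inj f" "finite (cycle_of f x)"
  shows "(f^^a) x = (f^^b) x \<longleftrightarrow> a mod period f x = b mod period f x"
proof
  define p where "p = period f x"
  have p: "0 < p" "(f^^p) x = x" using period[OF assms] unfolding p_def by auto
  assume "(f^^a) x = (f^^b) x"
  then have e: "(f^^(a mod p)) x = (f^^(b mod p)) x" using funpow_mod_eq[OF p(2)] by metis
  have "\<not> (i < j \<and> j < p \<and> (f^^i) x = (f^^j) x)" for i j
    using funpow_eq_imp_period[OF assms(1), of i j x] period_least[of "j - i" f x] unfolding p_def
    by auto
  then show "a mod p = b mod p" using e p(1) by (metis linorder_neqE_nat mod_less_divisor)
next
  assume "a mod period f x = b mod period f x"
  then show "(f^^a) x = (f^^b) x" using funpow_mod_eq[OF period(2)[OF assms]] by metis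
qed

lemma card_finite_cycle:
  assumes "inj f" "finite (cycle_of f x)"
  shows "card (cycle_of f x) = period f x"
proof -
  have "inj_on (\<lambda>i. (f^^i) x) {..<period f x}"
    using funpow_eq_iff_mod_period[OF assms] by (auto intro: inj_onI)
  then show ?thesis using cycle_of_periodic[OF assms(1) period[OF assms]] by (simp add: card_image)
qed

lemma finite_cycle_funpow_eq_iff:
  assumes "inj f" "finite (cycle_of f x)"
  shows "(f^^a) x = (f^^b) x \<longleftrightarrow> a mod card (cycle_of f x) = b mod card (cycle_of f x)"
  using funpow_eq_iff_mod_period[OF assms] card_finite_cycle[OF assms] by simp

lemma infinite_cycle_funpow_eq_iff:
  assumes "inj f" "infinite (cycle_of f x)"
  shows "(f^^a) x = (f^^b) x \<longleftrightarrow> a = b"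
proof
  have no_period: "(f^^p) x \<noteq> x" if "0 < p" for p
    using cycle_of_periodic[OF assms(1) that] assms(2) by auto
  assume e: "(f^^a) x = (f^^b) x"
  show "a = b"
  proof (cases a b rule: linorder_cases)
    case less
    then show ?thesis using funpow_eq_imp_period[OF assms(1), of a b x] e no_period[of "b - a"] by simp
  next
    case greater
    then show ?thesis using funpow_eq_imp_period[OF assms(1), of b a x] e no_period[of "a - b"] by simp
  qed
qed simp

lemma finite_cycle_subset_range:
  assumes "inj f" "finite (cycle_of f x)"
  shows "cycle_of f x \<subseteq> range f"
proof
  fix y assume "y \<in> cycle_of f x"
  then have fin: "finite (cycle_of f y)" using assms(2) cycle_of_eq by metis
  obtain q where "period f y = Suc q" using period(1)[OF assms(1) fin] gr0_conv_Suc by blast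
  then have "f ((f^^q) y) = y" using period(2)[OF assms(1) fin] by simp
  then show "y \<in> range f" by (metis rangeI)
qed

lemma cycle_subset_range_preimage:
  assumes "cycle_of f x \<subseteq> range f" "t \<in> cycle_of f x"
  shows "\<exists>y\<in>cycle_of f x. (f^^j) y = t"
proof (induction j)
  case 0 then show ?case using assms(2) by auto
next
  case (Suc j)
  then obtain z where z: "z \<in> cycle_of f x" "(f^^j) z = t" by blast
  then obtain y where y: "z = f y" using assms(1) by blast
  then have "y \<in> cycle_of f x" using z(1) cycle_of_closed[of f x] unfolding closed_under_def by blast
  moreover have "(f^^Suc j) y = t" using z y by (simp add: funpow_swap1)
  ultimately show ?case by blast
qed

section \<open>Composing with a transposition\<close>

lemma cycle_of_cong:
  assumes g: "closed_under g S" and g': "closed_under g' S" and x: "x \<in> S"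
    and agree: "\<forall>z\<in>S. g' z = g z"
  shows "cycle_of g' x = cycle_of g x"
proof -
  have iter: "(g'^^m) y = (g^^m) y" if "y \<in> S" for m y
    by (induction m) (simp_all add: agree closed_under_funpow_iff[OF g] that)
  have "y \<in> cycle_of g' x \<longleftrightarrow> y \<in> cycle_of g x" for y
  proof (cases "y \<in> S")
    case True
    then show ?thesis unfolding cycle_of_def using iter x by simp
  next
    case False
    then show ?thesis using cycle_of_minimal[OF g x] cycle_of_minimal[OF g' x] by blast
  qed
  then show ?thesis by blast
qed

lemma transpose_mem_iff: "a \<in> U \<Longrightarrow> b \<in> U \<Longrightarrow> transpose a b z \<in> U \<longleftrightarrow> z \<in> U"
  by (auto simp: transpose_def)

lemma closed_under_compose_transpose:
  "closed_under g U \<Longrightarrow> a \<in> U \<Longrightarrow> b \<in> U \<Longrightarrow> closed_under (g \<circ> transpose a b) U"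
  unfolding closed_under_def by (simp add: transpose_mem_iff)

lemma closed_under_uncompose_transpose:
  "closed_under (g \<circ> transpose a b) U \<Longrightarrow> a \<in> U \<Longrightarrow> b \<in> U \<Longrightarrow> closed_under g U"
  using closed_under_compose_transpose[of "g \<circ> transpose a b" U a b] by (simp add: comp_assoc)

lemma inj_compose_transpose: "inj g \<Longrightarrow> inj (g \<circ> transpose a b)"
  by (rule inj_compose[OF _ inj_transpose])

lemma range_compose_transpose: "range (g \<circ> transpose a b) = range g"
proof -
  have "range (g \<circ> transpose a b) = g ` range (transpose a b)" by (rule image_comp[symmetric])
  then show ?thesis by (simp add: surj_transpose)
qed

lemma cycles_compose_transpose:
  assumes U: "closed_under g U" and ab: "a \<in> U" "b \<in> U"
  defines "gt \<equiv> g \<circ> transpose a b"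
  shows "cycles gt = (cycles g - {S\<in>cycles g. S \<subseteq> U}) \<union> cycle_of gt ` U"
proof -
  have outside: "cycle_of gt x = cycle_of g x" if "x \<notin> U" for x
  proof (rule cycle_of_cong)
    show "closed_under g (- U)" using U unfolding closed_under_def by blast
    show "closed_under gt (- U)"
      using closed_under_compose_transpose[OF U ab] unfolding gt_def closed_under_def by blast
    show "\<forall>z\<in>- U. gt z = g z" using ab unfolding gt_def by (auto simp: transpose_def)
  qed (use that in simp)
  show ?thesis
  proof (intro equalityI subsetI)
    fix S assume "S \<in> cycles gt"
    then obtain x where S: "S = cycle_of gt x" unfolding cycles_eq_range_cycle_of by blast
    show "S \<in> (cycles g - {S\<in>cycles g. S \<subseteq> U}) \<union> cycle_of gt ` U"
      using S outside[of x] cycle_of_self[of x g] by (cases "x \<in> U") auto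
  next
    fix S assume S: "S \<in> (cycles g - {S\<in>cycles g. S \<subseteq> U}) \<union> cycle_of gt ` U"
    show "S \<in> cycles gt"
    proof (cases "S \<in> cycle_of gt ` U")
      case False
      then obtain x where x: "S \<in> cycles g" "x \<in> S" "x \<notin> U" using S by auto
      then show ?thesis using cycle_eq_cycle_of[OF x(1,2)] outside[OF x(3)] cycle_of_in_cycles by metis
    qed auto
  qed
qed

lemma transpose_orbit:
  assumes avoid: "\<forall>i. 0 < i \<and> i < k \<longrightarrow> (g^^i) a \<noteq> a \<and> (g^^i) a \<noteq> b" and j: "j < k"
  shows "((g \<circ> transpose a b)^^j) (g a) = (g^^Suc j) a"
  using j
proof (induction j)
  case (Suc j)
  then have "(g^^Suc j) a \<noteq> a" "(g^^Suc j) a \<noteq> b" using avoid by auto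
  then show ?case using Suc by (simp add: transpose_def)
qed simp

lemma card_iterates:
  fixes g :: "'a \<Rightarrow> 'a"
  assumes g: "inj g" and no_return: "\<forall>i. 0 < i \<and> i \<le> k \<longrightarrow> (g^^i) a \<noteq> a"
  shows "card ((\<lambda>i. (g^^i) a) ` {1..k}) = k"
proof -
  have "inj_on (\<lambda>i. (g^^i) a) {1..k}"
  proof (rule inj_onI)
    fix i j assume ij: "i \<in> {1..k}" "j \<in> {1..k}" "(g^^i) a = (g^^j) a"
    show "i = j"
    proof (cases i j rule: linorder_cases)
      case less
      then show ?thesis using funpow_eq_imp_period[OF g, of i j a] ij no_return by auto
    next
      case greater
      then show ?thesis using funpow_eq_imp_period[OF g, of j i a] ij no_return by auto
    qed
  qed
  then show ?thesis by (simp add: card_image)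
qed

lemma split_cycle_piece:
  fixes g :: "'a \<Rightarrow> 'a"
  assumes g: "inj g" and k: "0 < k" and no_return: "\<forall>i. 0 < i \<and> i \<le> k \<longrightarrow> (g^^i) a \<noteq> a"
  defines "gt \<equiv> g \<circ> transpose a ((g^^k) a)" and "C1 \<equiv> (\<lambda>i. (g^^i) a) ` {1..k}"
  shows "cycle_of gt (g a) = C1"
proof -
  let ?b = "(g^^k) a"
  have avoid: "\<forall>i. 0 < i \<and> i < k \<longrightarrow> (g^^i) a \<noteq> a \<and> (g^^i) a \<noteq> ?b"
  proof (intro allI impI conjI notI)
    fix i assume i: "0 < i \<and> i < k"
    then show "(g^^i) a = a \<Longrightarrow> False" using no_return by simp
    assume "(g^^i) a = ?b"
    then have "(g^^(k - i)) a = a" using funpow_eq_imp_period[OF g, of i k a] i by simp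
    then show False using no_return i by simp
  qed
  have orbit: "(gt^^j) (g a) = (g^^Suc j) a" if "j < k" for j
    unfolding gt_def using transpose_orbit[OF avoid that] .
  obtain k' where k': "k = Suc k'" using k gr0_conv_Suc by blast
  have inj_gt: "inj gt" unfolding gt_def by (rule inj_compose_transpose[OF g])
  have "(gt^^k) (g a) = g a" using orbit[of k'] k' by (simp add: gt_def)
  then have "cycle_of gt (g a) = (\<lambda>j. (gt^^j) (g a)) ` {..<k}"
    by (rule cycle_of_periodic[OF inj_gt k])
  also have "\<dots> = (\<lambda>i. (g^^i) a) ` (Suc ` {..<k})" using orbit by (auto simp: image_image)
  finally show "cycle_of gt (g a) = C1" unfolding C1_def image_Suc_lessThan .
qed

lemma split_cycle_rest:
  fixes g :: "'a \<Rightarrow> 'a"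
  assumes g: "inj g" and k: "0 < k" and no_return: "\<forall>i. 0 < i \<and> i \<le> k \<longrightarrow> (g^^i) a \<noteq> a"
  defines "gt \<equiv> g \<circ> transpose a ((g^^k) a)" and "C1 \<equiv> (\<lambda>i. (g^^i) a) ` {1..k}"
  shows "cycle_of gt a = cycle_of g a - C1"
proof -
  let ?b = "(g^^k) a"
  have C1: "cycle_of gt (g a) = C1"
    unfolding gt_def C1_def by (rule split_cycle_piece[OF g k no_return])
  have a: "a \<notin> C1"
  proof
    assume "a \<in> C1"
    then obtain i where "i \<in> {1..k}" "(g^^i) a = a" unfolding C1_def by force
    then show False using no_return by simp
  qed
  have C1_sub: "C1 \<subseteq> cycle_of g a" unfolding C1_def by (auto simp: funpow_in_cycle_of)
  have "closed_under gt (C1 \<union> cycle_of gt a)"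
    using C1 closed_under_Un cycle_of_closed by metis
  moreover have "a \<in> C1 \<union> cycle_of gt a" "?b \<in> C1 \<union> cycle_of gt a" using k unfolding C1_def by auto
  ultimately have "closed_under g (C1 \<union> cycle_of gt a)"
    unfolding gt_def by (rule closed_under_uncompose_transpose)
  then have "cycle_of g a \<subseteq> C1 \<union> cycle_of gt a" by (rule cycle_of_minimal) simp
  moreover have "cycle_of gt a \<subseteq> cycle_of g a"
    unfolding gt_def
    by (rule cycle_of_minimal[OF closed_under_compose_transpose[OF cycle_of_closed]])
      (simp_all add: funpow_in_cycle_of)
  moreover have "cycle_of gt a \<inter> C1 = {}"
    using C1 a cycle_of_eq cycle_of_self by (metis disjoint_iff)
  ultimately show "cycle_of gt a = cycle_of g a - C1" using C1_sub by blast
qed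

lemma cycles_split:
  fixes g :: "'a \<Rightarrow> 'a"
  assumes g: "inj g" and k: "0 < k" and no_return: "\<forall>i. 0 < i \<and> i \<le> k \<longrightarrow> (g^^i) a \<noteq> a"
  defines "gt \<equiv> g \<circ> transpose a ((g^^k) a)" and "C1 \<equiv> (\<lambda>i. (g^^i) a) ` {1..k}"
  shows "cycles gt = (cycles g - {cycle_of g a}) \<union> {C1, cycle_of g a - C1}"
proof -
  let ?C = "cycle_of g a"
  note pieces = split_cycle_piece[OF g k no_return, folded gt_def C1_def]
    split_cycle_rest[OF g k no_return, folded gt_def C1_def]
  have "cycles gt = (cycles g - {S\<in>cycles g. S \<subseteq> ?C}) \<union> cycle_of gt ` ?C"
    unfolding gt_def by (rule cycles_compose_transpose) (simp_all add: cycle_of_closed funpow_in_cycle_of)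
  moreover have "{S\<in>cycles g. S \<subseteq> ?C} = {?C}" using cycle_subset_cycle_of[of _ g a] by fastforce
  moreover have "cycle_of gt ` ?C = {C1, ?C - C1}"
  proof (intro equalityI subsetI)
    fix S assume "S \<in> cycle_of gt ` ?C"
    then obtain x where x: "x \<in> ?C" "S = cycle_of gt x" by blast
    then show "S \<in> {C1, ?C - C1}"
      using pieces cycle_of_eq[of x gt a] cycle_of_eq[of x gt "g a"] by (cases "x \<in> C1") auto
  next
    have "g a \<in> ?C" "a \<in> ?C" using funpow_in_cycle_of[where j=1] by auto
    then show "S \<in> cycle_of gt ` ?C" if "S \<in> {C1, ?C - C1}" for S
      using that pieces by blast
  qed
  ultimately show ?thesis by simp
qed

lemma merge_cycle:
  fixes g :: "'a \<Rightarrow> 'a"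
  assumes g: "inj g" and fin: "finite (cycle_of g a)" and b: "b \<notin> cycle_of g a"
  defines "gt \<equiv> g \<circ> transpose a b"
  shows "cycle_of gt a = cycle_of g a \<union> cycle_of g b"
proof -
  define p where "p = period g a"
  have p: "0 < p" "(g^^p) a = a" using period[OF g fin] unfolding p_def by auto
  have avoid: "\<forall>i. 0 < i \<and> i < p \<longrightarrow> (g^^i) a \<noteq> a \<and> (g^^i) a \<noteq> b"
    using period_least[of _ g a] b funpow_in_cycle_of[where f=g and x=a] unfolding p_def by metis
  obtain p' where p': "p = Suc p'" using p(1) gr0_conv_Suc by blast
  have "(gt^^p') (g a) = a" using transpose_orbit[OF avoid, of p'] p' p(2) unfolding gt_def by simp
  then have ga: "g a \<in> cycle_of gt a" by (rule funpow_in_cycle_of')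
  have "(gt^^1) b = g a" unfolding gt_def by simp
  then have b': "b \<in> cycle_of gt a" using funpow_in_cycle_of' cycle_of_eq[OF ga] by metis
  have "closed_under g (cycle_of gt a)"
    by (rule closed_under_uncompose_transpose[of g a b, folded gt_def, OF cycle_of_closed cycle_of_self b'])
  then have "cycle_of g a \<subseteq> cycle_of gt a" "cycle_of g b \<subseteq> cycle_of gt a"
    using b' by (simp_all add: cycle_of_minimal)
  moreover have "cycle_of gt a \<subseteq> cycle_of g a \<union> cycle_of g b"
    unfolding gt_def
    by (rule cycle_of_minimal[OF closed_under_compose_transpose[OF
          closed_under_Un[OF cycle_of_closed cycle_of_closed]]]) simp_all
  ultimately show ?thesis by blast
qed

lemma cycles_merge:
  fixes g :: "'a \<Rightarrow> 'a"
  assumes g: "inj g" and fin: "finite (cycle_of g a)" and b: "b \<notin> cycle_of g a"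
  defines "gt \<equiv> g \<circ> transpose a b"
  shows "cycles gt = (cycles g - {cycle_of g a, cycle_of g b}) \<union> {cycle_of g a \<union> cycle_of g b}"
proof -
  let ?A = "cycle_of g a" and ?B = "cycle_of g b"
  have merged: "cycle_of gt a = ?A \<union> ?B" unfolding gt_def by (rule merge_cycle[OF g fin b])
  have "cycles gt = (cycles g - {S\<in>cycles g. S \<subseteq> ?A \<union> ?B}) \<union> cycle_of gt ` (?A \<union> ?B)"
    unfolding gt_def by (rule cycles_compose_transpose) (simp_all add: closed_under_Un cycle_of_closed)
  moreover have "{S\<in>cycles g. S \<subseteq> ?A \<union> ?B} = {?A, ?B}"
  proof (intro equalityI subsetI)
    fix S assume "S \<in> {S\<in>cycles g. S \<subseteq> ?A \<union> ?B}"
    then have S: "S \<in> cycles g" "S \<subseteq> ?A \<union> ?B" by auto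
    then obtain x where x: "x \<in> S" using cycles_nonempty by blast
    then have "x \<in> ?A \<or> x \<in> ?B" using S(2) by blast
    then show "S \<in> {?A, ?B}"
      using cycle_eq_cycle_of[OF S(1) x] cycle_of_eq[of x g a] cycle_of_eq[of x g b] by auto
  qed auto
  moreover have "cycle_of gt ` (?A \<union> ?B) = {?A \<union> ?B}"
  proof -
    have "cycle_of gt x = ?A \<union> ?B" if "x \<in> ?A \<union> ?B" for x
      using cycle_of_eq[of x gt a] merged that by simp
    then have "cycle_of gt ` (?A \<union> ?B) = (\<lambda>_. ?A \<union> ?B) ` (?A \<union> ?B)"
      by (rule image_cong[OF refl])
    also have "\<dots> = {?A \<union> ?B}" by (rule image_constant[of a]) simp
    finally show ?thesis .
  qed
  ultimately show ?thesis by simp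
qed

section \<open>Admissible maps and the parity of transposition steps\<close>

definition fin_cycles :: "('a \<Rightarrow> 'a) \<Rightarrow> 'a set set" where
  "fin_cycles g = {S\<in>cycles g. finite S}"

definition inf_cycles :: "('a \<Rightarrow> 'a) \<Rightarrow> 'a set set" where
  "inf_cycles g = {S\<in>cycles g. infinite S}"

definition admissible :: "('a \<Rightarrow> 'a) \<Rightarrow> bool" where
  "admissible g \<longleftrightarrow> inj g \<and> (\<exists>X. inf_cycles g = {X}) \<and> (\<forall>n>0. finite {S\<in>fin_cycles g. card S = n})"

lemma fin_cycles_card_pos: "S \<in> fin_cycles g \<Longrightarrow> 0 < card S"
  unfolding fin_cycles_def using cycles_nonempty by (auto simp: card_gt_0_iff)

lemma part_of_cycle_not_cycle:
  "P \<subseteq> cycle_of g a \<Longrightarrow> P \<noteq> {} \<Longrightarrow> P \<noteq> cycle_of g a \<Longrightarrow> P \<notin> cycles g"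
  using cycle_subset_cycle_of[of P g a] by blast

lemma replace_cycles:
  assumes "cycles gt = (cycles g - R) \<union> N" "N \<inter> cycles g = {}"
  shows "fin_cycles gt = (fin_cycles g - R) \<union> {S\<in>N. finite S}"
    and "inf_cycles gt = (inf_cycles g - R) \<union> {S\<in>N. infinite S}"
  using assms unfolding fin_cycles_def inf_cycles_def by auto

lemma split_finite_cycle:
  fixes g :: "'a \<Rightarrow> 'a"
  assumes g: "inj g" and fin: "finite (cycle_of g a)" and k: "0 < k"
    and no_return: "\<forall>i. 0 < i \<and> i \<le> k \<longrightarrow> (g^^i) a \<noteq> a"
  defines "gt \<equiv> g \<circ> transpose a ((g^^k) a)" and "C1 \<equiv> (\<lambda>i. (g^^i) a) ` {1..k}"
  shows "sym_diff (fin_cycles gt) (fin_cycles g) = {cycle_of g a, C1, cycle_of g a - C1}"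
    and "card {cycle_of g a, C1, cycle_of g a - C1} = 3"
    and "inf_cycles gt = inf_cycles g"
proof -
  let ?C = "cycle_of g a"
  have C1: "C1 \<subseteq> ?C" "a \<notin> C1" "C1 \<noteq> {}" "finite C1"
    using split_cycle_rest[OF g k no_return] k unfolding C1_def by (auto simp: funpow_in_cycle_of)
  have "C1 \<notin> cycles g" "?C - C1 \<notin> cycles g"
    by (rule part_of_cycle_not_cycle; use C1 in auto)+
  then have new: "{C1, ?C - C1} \<inter> cycles g = {}" by auto
  note rep = replace_cycles[OF cycles_split[OF g k no_return, folded gt_def C1_def] new]
  have "{S\<in>{C1, ?C - C1}. finite S} = {C1, ?C - C1}" "{S\<in>{C1, ?C - C1}. infinite S} = {}"
    using fin C1(4) by auto
  moreover have "?C \<in> fin_cycles g" "C1 \<notin> fin_cycles g" "?C - C1 \<notin> fin_cycles g"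
    using fin new unfolding fin_cycles_def by auto
  moreover have distinct: "?C \<noteq> C1" "?C \<noteq> ?C - C1" "C1 \<noteq> ?C - C1" using C1 by auto
  ultimately show "sym_diff (fin_cycles gt) (fin_cycles g) = {?C, C1, ?C - C1}"
    and "inf_cycles gt = inf_cycles g"
    using rep fin unfolding inf_cycles_def by auto
  show "card {?C, C1, ?C - C1} = 3" using distinct by simp
qed

lemma split_infinite_cycle:
  fixes g :: "'a \<Rightarrow> 'a"
  assumes g: "inj g" and X: "inf_cycles g = {X}" and a: "a \<in> X" and k: "0 < k"
  defines "gt \<equiv> g \<circ> transpose a ((g^^k) a)" and "C1 \<equiv> (\<lambda>i. (g^^i) a) ` {1..k}"
  shows "fin_cycles gt = insert C1 (fin_cycles g)" and "C1 \<notin> fin_cycles g" and "card C1 = k"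
    and "inf_cycles gt = {X - C1}" and "C1 \<subseteq> range g"
proof -
  have X_cyc: "X = cycle_of g a" "infinite X"
    using X cycle_eq_cycle_of[of X g a] a unfolding inf_cycles_def by auto
  have no_return: "\<forall>i. 0 < i \<and> i \<le> k \<longrightarrow> (g^^i) a \<noteq> a"
    using infinite_cycle_funpow_eq_iff[OF g, of a _ 0] X_cyc by auto
  have C1: "C1 \<subseteq> X" "a \<notin> C1" "C1 \<noteq> {}" "finite C1"
    using split_cycle_rest[OF g k no_return] X_cyc k unfolding C1_def by (auto simp: funpow_in_cycle_of)
  have "C1 \<notin> cycles g" "X - C1 \<notin> cycles g"
    by (rule part_of_cycle_not_cycle; use C1 X_cyc a in auto)+
  then have new: "{C1, X - C1} \<inter> cycles g = {}" by auto
  note rep = replace_cycles[OF cycles_split[OF g k no_return, folded gt_def C1_def X_cyc(1)] new]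
  have fin_X: "X \<notin> fin_cycles g" and fin_C1: "C1 \<notin> fin_cycles g"
    using X_cyc(2) new unfolding fin_cycles_def by auto
  have rest: "infinite (X - C1)" using X_cyc(2) C1(4) by simp
  have "{S\<in>{C1, X - C1}. finite S} = {C1}" "{S\<in>{C1, X - C1}. infinite S} = {X - C1}"
    using rest C1(4) by auto
  moreover have "fin_cycles g - {X} = fin_cycles g" using fin_X by auto
  ultimately show "fin_cycles gt = insert C1 (fin_cycles g)" "inf_cycles gt = {X - C1}"
    using rep X by simp_all
  show "C1 \<notin> fin_cycles g" by (rule fin_C1)
  show "card C1 = k" unfolding C1_def by (rule card_iterates[OF g no_return])
  show "C1 \<subseteq> range g" unfolding C1_def by (auto simp: Suc_le_eq gr0_conv_Suc)
qed

lemma merged_not_cycle: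
  assumes "b \<notin> cycle_of g a" shows "cycle_of g a \<union> cycle_of g b \<notin> cycles g"
proof
  assume "cycle_of g a \<union> cycle_of g b \<in> cycles g"
  then have "cycle_of g a \<union> cycle_of g b = cycle_of g a" by (rule cycle_eq_cycle_of) simp
  then show False using assms cycle_of_self[of b g] by blast
qed

lemma merge_finite_cycles:
  fixes g :: "'a \<Rightarrow> 'a"
  assumes g: "inj g" and fin: "finite (cycle_of g a)" "finite (cycle_of g b)" and b: "b \<notin> cycle_of g a"
  defines "gt \<equiv> g \<circ> transpose a b" and "A \<equiv> cycle_of g a" and "B \<equiv> cycle_of g b"
  shows "sym_diff (fin_cycles gt) (fin_cycles g) = {A, B, A \<union> B}"
    and "card {A, B, A \<union> B} = 3"
    and "inf_cycles gt = inf_cycles g"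
proof -
  have new: "{A \<union> B} \<inter> cycles g = {}" using merged_not_cycle[OF b] unfolding A_def B_def by simp
  note rep = replace_cycles[OF cycles_merge[OF g fin(1) b, folded gt_def A_def B_def] new]
  have "a \<notin> B" using b cycle_of_sym unfolding B_def by metis
  then have distinct: "A \<noteq> B" "A \<noteq> A \<union> B" "B \<noteq> A \<union> B"
    using b cycle_of_self[of a g] cycle_of_self[of b g] unfolding A_def B_def by blast+
  have "{S\<in>{A \<union> B}. finite S} = {A \<union> B}" "{S\<in>{A \<union> B}. infinite S} = {}"
    using fin unfolding A_def B_def by auto
  moreover have "A \<in> fin_cycles g" "B \<in> fin_cycles g" "A \<union> B \<notin> fin_cycles g"
    using fin new unfolding A_def B_def fin_cycles_def by auto
  moreover have "inf_cycles g - {A, B} = inf_cycles g"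
    using fin unfolding A_def B_def inf_cycles_def by auto
  ultimately show "sym_diff (fin_cycles gt) (fin_cycles g) = {A, B, A \<union> B}"
    and "inf_cycles gt = inf_cycles g"
    using rep distinct by auto
  show "card {A, B, A \<union> B} = 3" using distinct by simp
qed

lemma merge_into_infinite_cycle:
  fixes g :: "'a \<Rightarrow> 'a"
  assumes g: "inj g" and X: "inf_cycles g = {X}" and A: "A \<in> fin_cycles g"
    and a: "a \<in> A" and b: "b \<in> X"
  defines "gt \<equiv> g \<circ> transpose a b"
  shows "fin_cycles gt = fin_cycles g - {A}" and "inf_cycles gt = {A \<union> X}" and "A \<subseteq> range g"
proof -
  have A_cyc: "A = cycle_of g a" "finite A"
    using A cycle_eq_cycle_of[of A g a] a unfolding fin_cycles_def by auto
  have X_cyc: "X = cycle_of g b" "infinite X"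
    using X cycle_eq_cycle_of[of X g b] b unfolding inf_cycles_def by auto
  have b': "b \<notin> cycle_of g a" using A_cyc X_cyc cycle_of_eq by metis
  have new: "{A \<union> X} \<inter> cycles g = {}" using merged_not_cycle[OF b'] A_cyc X_cyc by simp
  have "finite (cycle_of g a)" using A_cyc by simp
  note rep = replace_cycles[OF cycles_merge[OF g this b', folded gt_def A_cyc(1) X_cyc(1)] new]
  have fin_new: "{S\<in>{A \<union> X}. finite S} = {}" and inf_new: "{S\<in>{A \<union> X}. infinite S} = {A \<union> X}"
    using X_cyc(2) by auto
  have "fin_cycles g - {A, X} = fin_cycles g - {A}"
    using X_cyc(2) unfolding fin_cycles_def by auto
  then show "fin_cycles gt = fin_cycles g - {A}" unfolding rep(1) fin_new by simp
  show "inf_cycles gt = {A \<union> X}" unfolding rep(2) inf_new X by auto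
  show "A \<subseteq> range g" using finite_cycle_subset_range[OF g] A_cyc by simp
qed

lemma C_fwd_C_open_single:
  assumes "inf_cycles g = {X}"
  shows "C_fwd g = (if X \<subseteq> range g then 0 else 1)" and "C_open g = (if X \<subseteq> range g then 1 else 0)"
proof -
  have "fwd_cycles g = {S\<in>inf_cycles g. S - range g \<noteq> {}}"
    and "open_cycles g = {S\<in>inf_cycles g. S - range g = {}}"
    unfolding fwd_cycles_def open_cycles_def inf_cycles_def by auto
  then have "fwd_cycles g = (if X \<subseteq> range g then {} else {X})"
    and "open_cycles g = (if X \<subseteq> range g then {X} else {})"
    using assms by auto
  then show "C_fwd g = (if X \<subseteq> range g then 0 else 1)" and "C_open g = (if X \<subseteq> range g then 1 else 0)"
    unfolding C_fwd_def C_open_def ecard_def by (simp_all add: zero_enat_def one_enat_def)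
qed

lemma C_open_eq_if_C_fwd_eq:
  assumes "admissible f" "admissible g" "C_fwd f = C_fwd g" shows "C_open f = C_open g"
proof -
  obtain X where X: "inf_cycles f = {X}" using assms(1) unfolding admissible_def by auto
  obtain Y where Y: "inf_cycles g = {Y}" using assms(2) unfolding admissible_def by auto
  show ?thesis
    using assms(3) C_fwd_C_open_single[OF X] C_fwd_C_open_single[OF Y] by (auto split: if_splits)
qed

lemma odd_step:
  assumes adm: "admissible g" and X: "inf_cycles g = {X}"
    and gt: "inj gt" "range gt = range g" "inf_cycles gt = {X'}" "X' - range g = X - range g"
    and D: "sym_diff (fin_cycles gt) (fin_cycles g) = D" "finite D" "odd (card D)"
  shows "admissible gt \<and> C_fwd gt = C_fwd g \<and> finite (sym_diff (fin_cycles gt) (fin_cycles g))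
    \<and> odd (card (sym_diff (fin_cycles gt) (fin_cycles g)))"
proof -
  have counts: "finite {S\<in>fin_cycles gt. card S = n}" if "0 < n" for n
  proof (rule finite_subset)
    show "{S\<in>fin_cycles gt. card S = n} \<subseteq> {S\<in>fin_cycles g. card S = n} \<union> D" using D(1) by blast
    show "finite ({S\<in>fin_cycles g. card S = n} \<union> D)" using adm that D(2) unfolding admissible_def by blast
  qed
  have "admissible gt" unfolding admissible_def using gt(1,3) counts by simp
  moreover have "X' \<subseteq> range gt \<longleftrightarrow> X \<subseteq> range g" using gt(2,4) by (metis Diff_eq_empty_iff)
  then have "C_fwd gt = C_fwd g" using C_fwd_C_open_single(1)[OF X] C_fwd_C_open_single(1)[OF gt(3)] by simp
  ultimately show ?thesis using D by simp
qed

lemma first_hit: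
  fixes g :: "'a \<Rightarrow> 'a"
  assumes "(g^^j) a = b" "a \<noteq> b"
  obtains k where "0 < k" "(g^^k) a = b" "\<forall>i. 0 < i \<and> i \<le> k \<longrightarrow> (g^^i) a \<noteq> a"
proof -
  define k where "k = (LEAST k. 0 < k \<and> (g^^k) a = b)"
  have "0 < j \<and> (g^^j) a = b" using assms by (cases j) auto
  then have hit: "0 < k \<and> (g^^k) a = b" unfolding k_def by (rule LeastI)
  have least: "k \<le> i" if "0 < i" "(g^^i) a = b" for i
    unfolding k_def by (rule Least_le) (use that in simp)
  have "(g^^i) a \<noteq> a" if i: "0 < i" "i \<le> k" for i
  proof
    assume ret: "(g^^i) a = a"
    then have "i \<noteq> k" using hit assms(2) by auto
    have "(g^^(k - i)) ((g^^i) a) = (g^^k) a" using i by (metis funpow_add le_add_diff_inverse2 comp_apply)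
    then have "(g^^(k - i)) a = b" using ret hit by simp
    then show False using least[of "k - i"] i \<open>i \<noteq> k\<close> by simp
  qed
  then show ?thesis using that hit by blast
qed

lemma step_split:
  fixes g :: "'a \<Rightarrow> 'a"
  assumes adm: "admissible g" and hit: "(g^^j) a = b" and ab: "a \<noteq> b"
  defines "gt \<equiv> g \<circ> transpose a b"
  shows "admissible gt \<and> C_fwd gt = C_fwd g \<and> finite (sym_diff (fin_cycles gt) (fin_cycles g))
    \<and> odd (card (sym_diff (fin_cycles gt) (fin_cycles g)))"
proof -
  have g: "inj g" using adm unfolding admissible_def by simp
  obtain X where X: "inf_cycles g = {X}" using adm unfolding admissible_def by auto
  obtain k where k: "0 < k" "(g^^k) a = b" and no_return: "\<forall>i. 0 < i \<and> i \<le> k \<longrightarrow> (g^^i) a \<noteq> a"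
    using first_hit[OF hit ab] by blast
  have gt: "inj gt" "range gt = range g"
    unfolding gt_def by (rule inj_compose_transpose[OF g], rule range_compose_transpose)
  show ?thesis
  proof (cases "finite (cycle_of g a)")
    case True
    note pieces = split_finite_cycle[OF g True k(1) no_return, unfolded k(2), folded gt_def]
    show ?thesis using odd_step[OF adm X gt pieces(3)[unfolded X] refl pieces(1)] pieces(2) by simp
  next
    case False
    then have "cycle_of g a \<in> inf_cycles g" unfolding inf_cycles_def by simp
    then have "cycle_of g a = X" using X by simp
    then have "a \<in> X" using cycle_of_self[of a g] by simp
    note pieces = split_infinite_cycle[OF g X this k(1), unfolded k(2), folded gt_def]
    let ?C1 = "(\<lambda>i. (g^^i) a) ` {1..k}"
    have "sym_diff (fin_cycles gt) (fin_cycles g) = {?C1}" using pieces(1,2) by auto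
    moreover have "(X - ?C1) - range g = X - range g" using pieces(5) by blast
    ultimately show ?thesis using odd_step[OF adm X gt pieces(4)] by simp
  qed
qed

lemma step_merge:
  fixes g :: "'a \<Rightarrow> 'a"
  assumes adm: "admissible g" and fin: "finite (cycle_of g a)" and b: "b \<notin> cycle_of g a"
  defines "gt \<equiv> g \<circ> transpose a b"
  shows "admissible gt \<and> C_fwd gt = C_fwd g \<and> finite (sym_diff (fin_cycles gt) (fin_cycles g))
    \<and> odd (card (sym_diff (fin_cycles gt) (fin_cycles g)))"
proof -
  have g: "inj g" using adm unfolding admissible_def by simp
  obtain X where X: "inf_cycles g = {X}" using adm unfolding admissible_def by auto
  have gt: "inj gt" "range gt = range g"
    unfolding gt_def by (rule inj_compose_transpose[OF g], rule range_compose_transpose)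
  show ?thesis
  proof (cases "finite (cycle_of g b)")
    case True
    note merged = merge_finite_cycles[OF g fin True b, folded gt_def]
    show ?thesis using odd_step[OF adm X gt merged(3)[unfolded X] refl merged(1)] merged(2) by simp
  next
    case False
    then have "cycle_of g b \<in> inf_cycles g" unfolding inf_cycles_def by simp
    then have "cycle_of g b = X" using X by simp
    then have bX: "b \<in> X" using cycle_of_self[of b g] by simp
    have A: "cycle_of g a \<in> fin_cycles g" using fin unfolding fin_cycles_def by simp
    note merged = merge_into_infinite_cycle[OF g X A cycle_of_self bX, folded gt_def]
    have "sym_diff (fin_cycles gt) (fin_cycles g) = {cycle_of g a}" using merged(1) A by auto
    moreover have "(cycle_of g a \<union> X) - range g = X - range g" using merged(3) by blast
    ultimately show ?thesis using odd_step[OF adm X gt merged(2)] by simp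
  qed
qed

lemma transposition_step:
  fixes g :: "'a \<Rightarrow> 'a"
  assumes adm: "admissible g" and ab: "a \<noteq> b"
  defines "gt \<equiv> g \<circ> transpose a b"
  shows "admissible gt \<and> C_fwd gt = C_fwd g \<and> finite (sym_diff (fin_cycles gt) (fin_cycles g))
    \<and> odd (card (sym_diff (fin_cycles gt) (fin_cycles g)))"
proof -
  have g: "inj g" using adm unfolding admissible_def by simp
  obtain X where X: "inf_cycles g = {X}" using adm unfolding admissible_def by auto
  have swap: "gt = g \<circ> transpose b a" unfolding gt_def by (simp add: transpose_commute)
  consider (same) "b \<in> cycle_of g a" | (fin) "b \<notin> cycle_of g a" "finite (cycle_of g a)"
    | (inf) "b \<notin> cycle_of g a" "infinite (cycle_of g a)" by blast
  then show ?thesis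
  proof cases
    case same
    then consider j where "(g^^j) a = b" | j where "(g^^j) b = a"
      using cycle_of_inj_cases[OF g] by metis
    then show ?thesis
      using step_split[OF adm _ ab, folded gt_def] step_split[OF adm _ ab[symmetric], folded swap]
      by cases blast+
  next
    case fin
    show ?thesis using step_merge[OF adm fin(2,1), folded gt_def] .
  next
    case inf
    then have "cycle_of g a \<in> inf_cycles g" unfolding inf_cycles_def by simp
    then have "cycle_of g b \<notin> inf_cycles g"
      using X inf(1) cycle_of_self[of b g] by auto
    then have "finite (cycle_of g b)" unfolding inf_cycles_def by simp
    moreover have "a \<notin> cycle_of g b" using inf(1) cycle_of_sym by metis
    ultimately show ?thesis using step_merge[OF adm, of b a, folded swap] by blast
  qed
qed

lemma card_sym_diff:
  assumes "finite U" "finite V"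
  shows "card (sym_diff U V) + 2 * card (U \<inter> V) = card U + card V"
proof -
  have "sym_diff U V = (U \<union> V) - (U \<inter> V)" by blast
  then have "card (sym_diff U V) = card (U \<union> V) - card (U \<inter> V)"
    using assms by (simp add: card_Diff_subset Int_lower1 le_supI1)
  moreover have "card (U \<inter> V) \<le> card (U \<union> V)" using assms by (simp add: card_mono le_supI1)
  ultimately show ?thesis using card_Un_Int[OF assms] by simp
qed

lemma sym_diff_parity:
  assumes fin: "finite (sym_diff X Y)" "finite (sym_diff Y Z)"
  shows "finite (sym_diff X Z)"
    and "even (card (sym_diff X Z)) \<longleftrightarrow> (even (card (sym_diff X Y)) \<longleftrightarrow> even (card (sym_diff Y Z)))"
proof -
  have eq: "sym_diff X Z = sym_diff (sym_diff X Y) (sym_diff Y Z)" by blast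
  then show "finite (sym_diff X Z)" using fin by simp
  show "even (card (sym_diff X Z)) \<longleftrightarrow> (even (card (sym_diff X Y)) \<longleftrightarrow> even (card (sym_diff Y Z)))"
    unfolding eq using card_sym_diff[OF fin] by (metis even_add even_mult_iff even_numeral)
qed

lemma swapidseq_parity:
  fixes g :: "'a \<Rightarrow> 'a"
  assumes "swapidseq n q" "admissible g"
  shows "admissible (g \<circ> q) \<and> C_fwd (g \<circ> q) = C_fwd g \<and> finite (sym_diff (fin_cycles (g \<circ> q)) (fin_cycles g))
    \<and> (even (card (sym_diff (fin_cycles (g \<circ> q)) (fin_cycles g))) \<longleftrightarrow> even n)"
  using assms
proof (induction n q arbitrary: g rule: swapidseq.induct)
  case id
  then show ?case by simp
next
  case (comp_Suc n p a b)
  let ?gt = "g \<circ> transpose a b"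
  have step: "admissible ?gt \<and> C_fwd ?gt = C_fwd g \<and> finite (sym_diff (fin_cycles ?gt) (fin_cycles g))
    \<and> odd (card (sym_diff (fin_cycles ?gt) (fin_cycles g)))"
    by (rule transposition_step[OF comp_Suc.prems comp_Suc.hyps(2)])
  then have IH: "admissible (?gt \<circ> p) \<and> C_fwd (?gt \<circ> p) = C_fwd ?gt
    \<and> finite (sym_diff (fin_cycles (?gt \<circ> p)) (fin_cycles ?gt))
    \<and> (even (card (sym_diff (fin_cycles (?gt \<circ> p)) (fin_cycles ?gt))) \<longleftrightarrow> even n)"
    using comp_Suc.IH by blast
  have eq: "g \<circ> (transpose a b \<circ> p) = ?gt \<circ> p" by (simp add: comp_assoc)
  note parity = sym_diff_parity[of "fin_cycles (?gt \<circ> p)" "fin_cycles ?gt" "fin_cycles g"]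
  show ?case unfolding eq using IH step parity by (simp del: comp_apply)
qed

section \<open>Conjugation invariance and the backward direction\<close>

lemma conj_funpow: "\<forall>x. k (F x) = G (k x) \<Longrightarrow> k ((F^^m) x) = (G^^m) (k x)"
  by (induction m) auto

lemma conj_cycle_of:
  assumes k: "bij k" and conj: "\<forall>x. k (F x) = G (k x)"
  shows "cycle_of G (k x) = k ` cycle_of F x"
proof -
  have "k z \<in> cycle_of G (k x) \<longleftrightarrow> z \<in> cycle_of F x" for z
    unfolding cycle_of_def using bij_is_inj[OF k] by (simp add: conj_funpow[OF conj, symmetric] inj_eq)
  moreover have "y = k (inv k y)" for y using k by (simp add: bij_is_surj surj_f_inv_f)
  ultimately show ?thesis by (metis (mono_tags, lifting) imageE image_eqI subsetI subset_antisym)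
qed

lemma conj_cycles:
  assumes k: "bij k" and conj: "\<forall>x. k (F x) = G (k x)"
  shows "cycles G = image k ` cycles F"
proof -
  have "cycles G = cycle_of G ` range k" using k by (simp add: bij_is_surj cycles_eq_range_cycle_of)
  also have "\<dots> = image k ` range (cycle_of F)"
    using conj_cycle_of[OF assms] by (simp add: image_image)
  finally show ?thesis by (simp add: cycles_eq_range_cycle_of)
qed

lemma ecard_image: "inj_on h A \<Longrightarrow> ecard (h ` A) = ecard A"
  unfolding ecard_def by (simp add: card_image finite_image_iff)

lemma conj_invariants:
  assumes k: "bij k" and conj: "\<forall>x. k (F x) = G (k x)"
  shows "Cn n F = Cn n G" and "C_fwd F = C_fwd G" and "C_open F = C_open G"
proof -
  have ik: "inj k" using k by (rule bij_is_inj)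
  have inj_img: "inj_on (image k) A" for A using ik by (simp add: inj_on_def inj_image_eq_iff)
  have cyc: "cycles G = image k ` cycles F" using conj_cycles[OF assms] .
  have "range G = G ` range k" using k by (simp add: bij_is_surj)
  also have "\<dots> = range (\<lambda>x. k (F x))" using conj by (simp add: image_comp comp_def)
  also have "\<dots> = k ` range F" by (simp add: image_comp comp_def)
  finally have rg: "range G = k ` range F" .
  have fin: "finite (k ` S) = finite S" and crd: "card (k ` S) = card S" for S
    using ik by (simp_all add: finite_image_iff card_image inj_on_subset)
  have dif: "(k ` S - range G \<noteq> {}) = (S - range F \<noteq> {})" for S
    using rg ik by (simp add: image_set_diff[symmetric])
  have filter: "{T \<in> image k ` A. P T} = image k ` {S\<in>A. P (k ` S)}" for A P by auto
  show "Cn n F = Cn n G"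
    unfolding Cn_def cyc filter fin crd ecard_image[OF inj_img] ..
  show "C_fwd F = C_fwd G"
    unfolding C_fwd_def fwd_cycles_def cyc filter fin dif ecard_image[OF inj_img] ..
  show "C_open F = C_open G"
    unfolding C_open_def open_cycles_def cyc filter fin dif ecard_image[OF inj_img] ..
qed

lemma int_card_diff:
  assumes "finite P" "finite Q"
  shows "int (card P) - int (card Q) = int (card (P - Q)) - int (card (Q - P))"
  using card_Int_Diff[OF assms(1), of Q] card_Int_Diff[OF assms(2), of P] by (simp add: Int_commute)

lemma sum_card_by_size:
  assumes "finite F" "finite M" "card ` F \<subseteq> M"
  shows "(\<Sum>n\<in>M. int (card {S\<in>F. card S = n})) = int (card F)"
  using sum.group[of F M card "\<lambda>_. 1::int"] assms by simp

lemma sum_size_count_diff: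
  fixes A B :: "'b set set"
  assumes fin: "finite (sym_diff A B)" and pos: "\<forall>S\<in>sym_diff A B. 0 < card S"
    and counts: "\<forall>n>0. finite {S\<in>A. card S = n} \<and> finite {S\<in>B. card S = n}"
  defines "D \<equiv> {n. 0 < n \<and> card {S\<in>A. card S = n} \<noteq> card {S\<in>B. card S = n}}"
  shows "finite D"
    and "(\<Sum>n\<in>D. int (card {S\<in>A. card S = n}) - int (card {S\<in>B. card S = n}))
         = int (card (A - B)) - int (card (B - A))"
proof -
  define d where "d n = int (card {S\<in>A - B. card S = n}) - int (card {S\<in>B - A. card S = n})" for n
  have diff: "int (card {S\<in>A. card S = n}) - int (card {S\<in>B. card S = n}) = d n" if "0 < n" for n
  proof -
    have "{S\<in>A. card S = n} - {S\<in>B. card S = n} = {S\<in>A - B. card S = n}"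
      and "{S\<in>B. card S = n} - {S\<in>A. card S = n} = {S\<in>B - A. card S = n}" by auto
    then show ?thesis
      unfolding d_def using int_card_diff[of "{S\<in>A. card S = n}" "{S\<in>B. card S = n}"] counts that
      by simp
  qed
  define M where "M = card ` sym_diff A B"
  have M: "finite M" "0 \<notin> M" unfolding M_def using fin pos by (simp, metis imageE less_irrefl)
  have DM: "D \<subseteq> M"
  proof
    fix n assume "n \<in> D"
    then have n: "0 < n" "card {S\<in>A. card S = n} \<noteq> card {S\<in>B. card S = n}" unfolding D_def by auto
    then have "d n \<noteq> 0" using diff[OF n(1)] by simp
    moreover have "d n = 0" if "n \<notin> M"
    proof -
      have e: "{S\<in>A - B. card S = n} = {}" "{S\<in>B - A. card S = n} = {}"
        using that unfolding M_def by auto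
      show ?thesis unfolding d_def e by simp
    qed
    ultimately show "n \<in> M" by blast
  qed
  then show "finite D" using M(1) finite_subset by blast
  have "(\<Sum>n\<in>D. int (card {S\<in>A. card S = n}) - int (card {S\<in>B. card S = n})) = (\<Sum>n\<in>D. d n)"
    using diff unfolding D_def by (intro sum.cong) auto
  also have "\<dots> = (\<Sum>n\<in>M. d n)"
  proof (rule sum.mono_neutral_left[OF M(1) DM], rule ballI)
    fix n assume n: "n \<in> M - D"
    then have "0 < n" using M(2) by (cases n) auto
    then have "card {S\<in>A. card S = n} = card {S\<in>B. card S = n}" using n unfolding D_def by blast
    then show "d n = 0" using diff[OF \<open>0 < n\<close>] by simp
  qed
  also have "\<dots> = (\<Sum>n\<in>M. int (card {S\<in>A - B. card S = n})) - (\<Sum>n\<in>M. int (card {S\<in>B - A. card S = n}))"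
    unfolding d_def by (simp add: sum_subtractf)
  also have "(\<Sum>n\<in>M. int (card {S\<in>A - B. card S = n})) = int (card (A - B))"
    using fin M(1) unfolding M_def by (intro sum_card_by_size) auto
  also have "(\<Sum>n\<in>M. int (card {S\<in>B - A. card S = n})) = int (card (B - A))"
    using fin M(1) unfolding M_def by (intro sum_card_by_size) auto
  finally show "(\<Sum>n\<in>D. int (card {S\<in>A. card S = n}) - int (card {S\<in>B. card S = n}))
         = int (card (A - B)) - int (card (B - A))" .
qed

definition cycle_count :: "('a \<Rightarrow> 'a) \<Rightarrow> nat \<Rightarrow> nat" where
  "cycle_count g n = card {S\<in>fin_cycles g. card S = n}"

definition count_diffs :: "('a \<Rightarrow> 'a) \<Rightarrow> ('a \<Rightarrow> 'a) \<Rightarrow> nat set" where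
  "count_diffs f g = {n. 0 < n \<and> cycle_count f n \<noteq> cycle_count g n}"

lemma Cn_admissible: "admissible g \<Longrightarrow> 0 < n \<Longrightarrow> Cn n g = enat (cycle_count g n)"
  unfolding Cn_def cycle_count_def ecard_def admissible_def fin_cycles_def by (simp add: conj_assoc)

lemma approx_even_admissible:
  assumes f: "admissible f" and g: "admissible g"
  shows "approx_even f g \<longleftrightarrow> C_fwd f = C_fwd g \<and> finite (count_diffs f g)
    \<and> even (\<Sum>n\<in>count_diffs f g. int (cycle_count f n) - int (cycle_count g n))"
proof -
  have D: "{n. 0 < n \<and> Cn n f \<noteq> Cn n g} = count_diffs f g"
    unfolding count_diffs_def using Cn_admissible[OF f] Cn_admissible[OF g] by auto
  have "(\<Sum>n\<in>count_diffs f g. int (the_enat (Cn n f)) - int (the_enat (Cn n g)))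
      = (\<Sum>n\<in>count_diffs f g. int (cycle_count f n) - int (cycle_count g n))"
    using Cn_admissible[OF f] Cn_admissible[OF g] unfolding count_diffs_def by (intro sum.cong) auto
  moreover have "\<forall>n>0. Cn n f \<noteq> \<infinity> \<and> Cn n g \<noteq> \<infinity>"
    using Cn_admissible[OF f] Cn_admissible[OF g] by simp
  ultimately show ?thesis
    unfolding approx_even_def approx_fin_def D using C_open_eq_if_C_fwd_eq[OF f g] by auto
qed

lemma approx_even_conj:
  assumes "bij k" "\<forall>x. k (F x) = G (k x)" shows "approx_even F g \<longleftrightarrow> approx_even G g"
  using conj_invariants[OF assms] unfolding approx_even_def approx_fin_def by simp

lemma approx_even_compose_even:
  fixes g :: "'a \<Rightarrow> 'a"
  assumes g: "admissible g" and q: "swapidseq n q" "even n"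
  shows "approx_even (g \<circ> q) g"
proof -
  note par = swapidseq_parity[OF q(1) g]
  let ?A = "fin_cycles (g \<circ> q)" and ?B = "fin_cycles g"
  have pos: "\<forall>S\<in>sym_diff ?A ?B. 0 < card S" using fin_cycles_card_pos by blast
  have counts: "\<forall>n>0. finite {S\<in>?A. card S = n} \<and> finite {S\<in>?B. card S = n}"
    using par g unfolding admissible_def by blast
  note sums = sum_size_count_diff[OF conjunct1[OF conjunct2[OF conjunct2[OF par]]] pos counts]
  have D: "count_diffs (g \<circ> q) g = {n. 0 < n \<and> card {S\<in>?A. card S = n} \<noteq> card {S\<in>?B. card S = n}}"
    unfolding count_diffs_def cycle_count_def ..
  have even: "even (int (card (?A - ?B)) - int (card (?B - ?A)))"
  proof -
    have "card (sym_diff ?A ?B) = card (?A - ?B) + card (?B - ?A)"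
      using par by (intro card_Un_disjoint) auto
    then have "even (card (?A - ?B) + card (?B - ?A))" using par q(2) by simp
    then show ?thesis by (simp add: even_diff)
  qed
  show ?thesis
    unfolding approx_even_admissible[OF conjunct1[OF par] g] D
    using par sums even unfolding cycle_count_def by simp
qed

lemma approx_even_of_conjugate:
  fixes g :: "'a \<Rightarrow> 'a"
  assumes g: "admissible g" and h: "bij h" and h1: "h1 \<in> Alt" and h2: "h2 \<in> Alt"
  shows "approx_even (inv h \<circ> h2 \<circ> g \<circ> h1 \<circ> h) g"
proof -
  let ?f = "inv h \<circ> h2 \<circ> g \<circ> h1 \<circ> h" and ?q = "h1 \<circ> h2"
  have p: "permutation h1" "permutation h2" "evenperm ?q"
    using h1 h2 evenperm_comp unfolding Alt_def by auto
  obtain n where n: "swapidseq n ?q" using permutation_compose[OF p(1,2)] unfolding permutation_def by blast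
  have "approx_even (g \<circ> ?q) g" using approx_even_compose_even[OF g n] evenperm_unique[OF n refl] p(3) by simp
  moreover have "approx_even (g \<circ> ?q) g \<longleftrightarrow> approx_even (h2 \<circ> g \<circ> h1) g"
    by (rule approx_even_conj[OF permutation_bijective[OF p(2)]]) simp
  moreover have "approx_even ?f g \<longleftrightarrow> approx_even (h2 \<circ> g \<circ> h1) g"
    by (rule approx_even_conj[OF h]) (simp add: h bij_is_surj surj_f_inv_f)
  ultimately show ?thesis by simp
qed

section \<open>A conjugacy criterion\<close>

(* A matching of the cycles of f with those of g: each cycle S of f is paired with the cycle
   \<psi> S of g, with base points bf S and bg (\<psi> S) whose orbits have the same coincidences
   (so both cycles are finite of the same size or both infinite) and which are both
   inside the range (if the cycles lie in the range) or both outside it. *)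
definition cycle_matching ::
    "('a \<Rightarrow> 'a) \<Rightarrow> ('a \<Rightarrow> 'a) \<Rightarrow> ('a set \<Rightarrow> 'a set) \<Rightarrow> ('a set \<Rightarrow> 'a) \<Rightarrow> ('a set \<Rightarrow> 'a) \<Rightarrow> bool" where
  "cycle_matching f g \<psi> bf bg \<longleftrightarrow> (\<forall>S\<in>cycles f. \<psi> S \<in> cycles g \<and> bf S \<in> S \<and> bg (\<psi> S) \<in> \<psi> S \<and>
     (\<forall>a b. (f^^a) (bf S) = (f^^b) (bf S) \<longleftrightarrow> (g^^a) (bg (\<psi> S)) = (g^^b) (bg (\<psi> S))) \<and>
     ((S \<subseteq> range f \<and> \<psi> S \<subseteq> range g) \<or> (bf S \<notin> range f \<and> bg (\<psi> S) \<notin> range g)))"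

definition corresponds ::
    "('a \<Rightarrow> 'a) \<Rightarrow> ('a \<Rightarrow> 'a) \<Rightarrow> ('a set \<Rightarrow> 'a set) \<Rightarrow> ('a set \<Rightarrow> 'a) \<Rightarrow> ('a set \<Rightarrow> 'a) \<Rightarrow> 'a \<Rightarrow> 'a \<Rightarrow> bool" where
  "corresponds f g \<psi> bf bg x y \<longleftrightarrow> \<psi> (cycle_of f x) = cycle_of g y \<and>
     (\<exists>m n. (f^^m) (bf (cycle_of f x)) = (f^^n) x \<and> (g^^m) (bg (cycle_of g y)) = (g^^n) y)"

lemma corresponds_intro:
  "cycle_of g y = \<psi> (cycle_of f x) \<Longrightarrow> (f^^m) (bf (cycle_of f x)) = (f^^n) x
    \<Longrightarrow> (g^^m) (bg (\<psi> (cycle_of f x))) = (g^^n) y \<Longrightarrow> corresponds f g \<psi> bf bg x y"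
  unfolding corresponds_def by auto

lemma funpow_eq_shift:
  fixes f :: "'a \<Rightarrow> 'a"
  assumes "(f^^m) s = (f^^n) x" shows "(f^^(m + k)) s = (f^^(n + k)) x"
proof -
  have "(f^^(m + k)) s = (f^^k) ((f^^m) s)" "(f^^(n + k)) x = (f^^k) ((f^^n) x)"
    by (simp_all add: funpow_add add.commute)
  then show ?thesis using assms by simp
qed

(* Every point x has a correspondent: if x is a forward iterate of the base point, take the
   same iterate of the matched base point; otherwise the cycle either lies in the range, so
   that the matched base point has preimages of all orders, or x is the base point itself. *)
lemma corresponds_exists:
  assumes f: "inj f" and match: "cycle_matching f g \<psi> bf bg"
  shows "\<exists>y. corresponds f g \<psi> bf bg x y"
proof -
  let ?S = "cycle_of f x"
  let ?s = "bf ?S" and ?t = "bg (\<psi> ?S)"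
  have "\<psi> ?S \<in> cycles g" "?s \<in> ?S" "?t \<in> \<psi> ?S"
    and range: "(?S \<subseteq> range f \<and> \<psi> ?S \<subseteq> range g) \<or> (?s \<notin> range f \<and> ?t \<notin> range g)"
    using match unfolding cycle_matching_def by auto
  then have T: "\<psi> ?S = cycle_of g ?t" and x: "x \<in> cycle_of f ?s"
    using cycle_eq_cycle_of cycle_of_sym by metis+
  have on_T: "cycle_of g y = \<psi> ?S" if "y \<in> cycle_of g ?t" for y using T cycle_of_eq[OF that] by simp
  consider j where "x = (f^^j) ?s" | j where "(f^^j) x = ?s" using cycle_of_inj_cases[OF f x] by blast
  then show ?thesis
  proof cases
    case (1 j)
    have "corresponds f g \<psi> bf bg x ((g^^j) ?t)"
      by (rule corresponds_intro[where m=j and n=0]) (use 1 on_T[OF funpow_in_cycle_of] in simp_all)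
    then show ?thesis by blast
  next
    case (2 j)
    show ?thesis
    proof (cases "?s \<notin> range f \<and> ?t \<notin> range g")
      case True
      then have "j = 0" using 2 by (cases j) (simp_all, metis rangeI)
      have "corresponds f g \<psi> bf bg x ?t"
        by (rule corresponds_intro[where m=0 and n=0]) (use 2 \<open>j = 0\<close> T in simp_all)
      then show ?thesis by blast
    next
      case False
      then have "cycle_of g ?t \<subseteq> range g" using range T by auto
      then obtain y where y: "y \<in> cycle_of g ?t" "(g^^j) y = ?t"
        using cycle_subset_range_preimage[of g ?t ?t j] by auto
      have "corresponds f g \<psi> bf bg x y"
        by (rule corresponds_intro[where m=0 and n=j]) (use 2 y on_T in simp_all)
      then show ?thesis by blast
    qed
  qed
qed

(* Correspondents are unique, because iterates of the two base points coincide alike. *)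
lemma corresponds_unique:
  assumes g: "inj g" and match: "cycle_matching f g \<psi> bf bg"
    and y: "corresponds f g \<psi> bf bg x y" and y': "corresponds f g \<psi> bf bg x y'"
  shows "y = y'"
proof -
  let ?S = "cycle_of f x"
  define s t where "s = bf ?S" and "t = bg (\<psi> ?S)"
  have same_orbit: "(f^^a) s = (f^^b) s \<longleftrightarrow> (g^^a) t = (g^^b) t" for a b
    using match unfolding cycle_matching_def s_def t_def by simp
  obtain m n m' n' where mn: "(f^^m) s = (f^^n) x" "(g^^m) t = (g^^n) y"
    and mn': "(f^^m') s = (f^^n') x" "(g^^m') t = (g^^n') y'"
    using y y' unfolding corresponds_def s_def t_def by metis
  have "(f^^(m + n')) s = (f^^(m' + n)) s"
    using funpow_eq_shift[OF mn(1), of n'] funpow_eq_shift[OF mn'(1), of n] by (simp add: add.commute)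
  then have "(g^^(m + n')) t = (g^^(m' + n)) t" using same_orbit by blast
  then have "(g^^(n + n')) y = (g^^(n + n')) y'"
    using funpow_eq_shift[OF mn(2), of n'] funpow_eq_shift[OF mn'(2), of n] by (simp add: add.commute)
  then show "y = y'" using funpow_cancel[OF g] by blast
qed

lemma corresponds_step:
  assumes "corresponds f g \<psi> bf bg x y" shows "corresponds f g \<psi> bf bg (f x) (g y)"
proof -
  have "f x \<in> cycle_of f x" "g y \<in> cycle_of g y" using funpow_in_cycle_of[where j=1] by simp_all
  then have cf: "cycle_of f (f x) = cycle_of f x" and cg: "cycle_of g (g y) = cycle_of g y"
    by (simp_all add: cycle_of_eq)
  obtain m n where "\<psi> (cycle_of f x) = cycle_of g y" "(f^^m) (bf (cycle_of f x)) = (f^^n) x"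
    "(g^^m) (bg (cycle_of g y)) = (g^^n) y" using assms unfolding corresponds_def by blast
  then show ?thesis unfolding corresponds_def cf cg
    by (intro conjI exI[of _ "Suc m"] exI[of _ n]) (simp_all add: funpow_swap1)
qed

lemma cycle_matching_inverse:
  assumes bij: "bij_betw \<psi> (cycles f) (cycles g)" and match: "cycle_matching f g \<psi> bf bg"
  defines "\<psi>' \<equiv> inv_into (cycles f) \<psi>"
  shows "cycle_matching g f \<psi>' bg bf"
    and "corresponds f g \<psi> bf bg x y \<longleftrightarrow> corresponds g f \<psi>' bg bf y x"
proof -
  have inv: "\<psi>' T \<in> cycles f" "\<psi> (\<psi>' T) = T" if "T \<in> cycles g" for T
    using that bij unfolding \<psi>'_def
    by (auto simp: bij_betw_def inv_into_into f_inv_into_f)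
  have eqv: "\<psi> S = T \<longleftrightarrow> \<psi>' T = S" if "S \<in> cycles f" "T \<in> cycles g" for S T
    using that inv bij unfolding \<psi>'_def bij_betw_def by (auto simp: inv_into_f_f)
  show "cycle_matching g f \<psi>' bg bf"
    unfolding cycle_matching_def
  proof
    fix T assume T: "T \<in> cycles g"
    then show "\<psi>' T \<in> cycles f \<and> bg T \<in> T \<and> bf (\<psi>' T) \<in> \<psi>' T \<and>
       (\<forall>a b. (g^^a) (bg T) = (g^^b) (bg T) \<longleftrightarrow> (f^^a) (bf (\<psi>' T)) = (f^^b) (bf (\<psi>' T))) \<and>
       ((T \<subseteq> range g \<and> \<psi>' T \<subseteq> range f) \<or> (bg T \<notin> range g \<and> bf (\<psi>' T) \<notin> range f))"
      using match inv[OF T] unfolding cycle_matching_def by (metis (no_types, lifting))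
  qed
  show "corresponds f g \<psi> bf bg x y \<longleftrightarrow> corresponds g f \<psi>' bg bf y x"
    unfolding corresponds_def using eqv[OF cycle_of_in_cycles cycle_of_in_cycles] by metis
qed

(* Injections admitting a cycle matching are conjugate: map each point to its correspondent. *)
lemma conjugate_if_cycle_matching:
  fixes f g :: "'a \<Rightarrow> 'a"
  assumes f: "inj f" and g: "inj g" and bij: "bij_betw \<psi> (cycles f) (cycles g)"
    and match: "cycle_matching f g \<psi> bf bg"
  shows "\<exists>k. bij k \<and> (\<forall>x. k (f x) = g (k x))"
proof -
  let ?R = "corresponds f g \<psi> bf bg"
  note inverse = cycle_matching_inverse[OF bij match]
  have unique_image: "\<exists>!y. ?R x y" for x
    using corresponds_exists[OF f match] corresponds_unique[OF g match] by blast
  have unique_preimage: "\<exists>!x. ?R x y" for y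
    using corresponds_exists[OF g inverse(1)] corresponds_unique[OF f inverse(1)] inverse(2) by metis
  define k where "k x = (THE y. ?R x y)" for x
  have k: "?R x y \<longleftrightarrow> k x = y" for x y unfolding k_def using unique_image the1_equality theI' by metis
  have "bij k"
    unfolding bij_def inj_def surj_def using k unique_preimage by metis
  moreover have "k (f x) = g (k x)" for x using corresponds_step k by metis
  ultimately show ?thesis by blast
qed

lemma cycles_fin_inf: "cycles g = fin_cycles g \<union> inf_cycles g"
  unfolding fin_cycles_def inf_cycles_def by blast

lemma cycle_bijection:
  fixes f g :: "'a \<Rightarrow> 'a"
  assumes f: "admissible f" and g: "admissible g"
    and counts: "\<forall>n>0. cycle_count f n = cycle_count g n"
  obtains \<psi> where "bij_betw \<psi> (cycles f) (cycles g)"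
    and "\<forall>S\<in>cycles f. (finite (\<psi> S) \<longleftrightarrow> finite S) \<and> card (\<psi> S) = card S"
proof -
  obtain Xf Xg where Xf: "inf_cycles f = {Xf}" and Xg: "inf_cycles g = {Xg}"
    using f g unfolding admissible_def by metis
  let ?F = "\<lambda>n. {S\<in>fin_cycles f. card S = n}" and ?G = "\<lambda>n. {S\<in>fin_cycles g. card S = n}"
  have "\<exists>\<phi>. bij_betw \<phi> (?F n) (?G n)" if "0 < n" for n
    using f g counts that unfolding admissible_def cycle_count_def by (intro finite_same_card_bij) auto
  then have "\<forall>n. \<exists>\<phi>. 0 < n \<longrightarrow> bij_betw \<phi> (?F n) (?G n)" by blast
  then obtain \<phi> where \<phi>: "\<And>n. 0 < n \<Longrightarrow> bij_betw (\<phi> n) (?F n) (?G n)"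
    using choice[of "\<lambda>n \<phi>. 0 < n \<longrightarrow> bij_betw \<phi> (?F n) (?G n)"] by blast
  define \<psi> where "\<psi> S = (if finite S then \<phi> (card S) S else Xg)" for S
  have "bij_betw \<psi> (?F n) (?G n)" if "0 < n" for n
    using \<phi>[OF that] by (rule bij_betw_cong[THEN iffD1, rotated]) (auto simp: \<psi>_def fin_cycles_def)
  then have "bij_betw \<psi> (\<Union>n\<in>{0<..}. ?F n) (\<Union>n\<in>{0<..}. ?G n)"
    by (intro bij_betw_UNION_disjoint) (auto simp: disjoint_family_on_def)
  moreover have "(\<Union>n\<in>{0<..}. ?F n) = fin_cycles f" "(\<Union>n\<in>{0<..}. ?G n) = fin_cycles g"
    using fin_cycles_card_pos by fastforce+
  moreover have "bij_betw \<psi> {Xf} {Xg}"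
    using Xf unfolding \<psi>_def inf_cycles_def by auto
  moreover have "fin_cycles g \<inter> {Xg} = {}" using Xg unfolding fin_cycles_def inf_cycles_def by auto
  ultimately have "bij_betw \<psi> (fin_cycles f \<union> {Xf}) (fin_cycles g \<union> {Xg})"
    by (metis bij_betw_combine)
  then have "bij_betw \<psi> (cycles f) (cycles g)" unfolding cycles_fin_inf Xf Xg .
  moreover have "(finite (\<psi> S) \<longleftrightarrow> finite S) \<and> card (\<psi> S) = card S" if "S \<in> cycles f" for S
  proof (cases "finite S")
    case True
    then have "S \<in> ?F (card S)" "0 < card S" using that fin_cycles_card_pos unfolding fin_cycles_def by auto
    then have "\<phi> (card S) S \<in> ?G (card S)" using bij_betwE[OF \<phi>] by blast
    then show ?thesis using True unfolding \<psi>_def fin_cycles_def by simp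
  next
    case False
    have "infinite Xg" using Xg unfolding inf_cycles_def by blast
    then show ?thesis using False unfolding \<psi>_def by simp
  qed
  ultimately show ?thesis using that by blast
qed

definition base_point :: "('a \<Rightarrow> 'a) \<Rightarrow> 'a set \<Rightarrow> 'a" where
  "base_point f S = (if S \<subseteq> range f then SOME x. x \<in> S else SOME x. x \<in> S - range f)"

lemma base_point:
  assumes "S \<noteq> {}"
  shows "base_point f S \<in> S" and "\<not> S \<subseteq> range f \<Longrightarrow> base_point f S \<notin> range f"
proof -
  have "S - range f \<noteq> {} \<Longrightarrow> (SOME x. x \<in> S - range f) \<in> S - range f" by (metis some_in_eq)
  then show "base_point f S \<in> S" "\<not> S \<subseteq> range f \<Longrightarrow> base_point f S \<notin> range f"
    unfolding base_point_def using assms by (auto simp: some_in_eq)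
qed

lemma same_size_orbits:
  assumes f: "inj f" and g: "inj g"
    and size: "finite (cycle_of g t) \<longleftrightarrow> finite (cycle_of f s)" "card (cycle_of g t) = card (cycle_of f s)"
  shows "(f^^a) s = (f^^b) s \<longleftrightarrow> (g^^a) t = (g^^b) t"
proof (cases "finite (cycle_of f s)")
  case True
  then show ?thesis using finite_cycle_funpow_eq_iff[OF f] finite_cycle_funpow_eq_iff[OF g] size by simp
next
  case False
  then show ?thesis using infinite_cycle_funpow_eq_iff[OF f] infinite_cycle_funpow_eq_iff[OF g] size by simp
qed

lemma conjugate_if_same_counts:
  fixes f g :: "'a \<Rightarrow> 'a"
  assumes f: "admissible f" and g: "admissible g"
    and counts: "\<forall>n>0. cycle_count f n = cycle_count g n" and fwd: "C_fwd f = C_fwd g"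
  shows "\<exists>k. bij k \<and> (\<forall>x. k (f x) = g (k x))"
proof -
  have inj: "inj f" "inj g" using f g unfolding admissible_def by auto
  obtain Xf Xg where Xf: "inf_cycles f = {Xf}" and Xg: "inf_cycles g = {Xg}"
    using f g unfolding admissible_def by metis
  obtain \<psi> where \<psi>: "bij_betw \<psi> (cycles f) (cycles g)"
    and size: "\<forall>S\<in>cycles f. (finite (\<psi> S) \<longleftrightarrow> finite S) \<and> card (\<psi> S) = card S"
    using cycle_bijection[OF f g counts] by blast
  have same_type: "Xf \<subseteq> range f \<longleftrightarrow> Xg \<subseteq> range g"
    using fwd C_fwd_C_open_single(1)[OF Xf] C_fwd_C_open_single(1)[OF Xg] by (auto split: if_splits)
  have "cycle_matching f g \<psi> (base_point f) (base_point g)"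
    unfolding cycle_matching_def
  proof
    fix S assume S: "S \<in> cycles f"
    let ?T = "\<psi> S" and ?s = "base_point f S" and ?t = "base_point g (\<psi> S)"
    have T: "?T \<in> cycles g" using bij_betwE[OF \<psi>] S by blast
    have ne: "S \<noteq> {}" "?T \<noteq> {}" using cycles_nonempty S T by blast+
    have pts: "?s \<in> S" "?t \<in> ?T" using base_point(1)[OF ne(1)] base_point(1)[OF ne(2)] .
    have cyc: "cycle_of f ?s = S" "cycle_of g ?t = ?T"
      using cycle_eq_cycle_of[OF S pts(1)] cycle_eq_cycle_of[OF T pts(2)] by simp_all
    have orbit: "\<forall>a b. (f^^a) ?s = (f^^b) ?s \<longleftrightarrow> (g^^a) ?t = (g^^b) ?t"
      using same_size_orbits[OF inj] size S cyc by simp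
    have range: "(S \<subseteq> range f \<and> ?T \<subseteq> range g) \<or> (?s \<notin> range f \<and> ?t \<notin> range g)"
    proof (cases "finite S")
      case True
      then show ?thesis
        using finite_cycle_subset_range[OF inj(1), of ?s] finite_cycle_subset_range[OF inj(2), of ?t]
          size S cyc by simp
    next
      case False
      then have "S = Xf" "?T = Xg" using S T size Xf Xg unfolding inf_cycles_def by auto
      then show ?thesis using same_type base_point(2)[OF ne(1)] base_point(2)[OF ne(2)] by metis
    qed
    show "?T \<in> cycles g \<and> ?s \<in> S \<and> ?t \<in> ?T \<and>
      (\<forall>a b. (f^^a) ?s = (f^^b) ?s \<longleftrightarrow> (g^^a) ?t = (g^^b) ?t) \<and>
      ((S \<subseteq> range f \<and> ?T \<subseteq> range g) \<or> (?s \<notin> range f \<and> ?t \<notin> range g))"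
      using T pts orbit range by blast
  qed
  then show ?thesis using conjugate_if_cycle_matching[OF inj \<psi>] by blast
qed

section \<open>The forward direction\<close>

lemma cycle_count_split:
  fixes g :: "'a \<Rightarrow> 'a"
  assumes adm: "admissible g" and X: "inf_cycles g = {X}" and a: "a \<in> X" and n: "0 < n"
  defines "gt \<equiv> g \<circ> transpose a ((g^^n) a)"
  shows "a \<noteq> (g^^n) a" and "cycle_count gt n = Suc (cycle_count g n)"
    and "\<forall>m. m \<noteq> n \<longrightarrow> cycle_count gt m = cycle_count g m"
proof -
  have g: "inj g" using adm unfolding admissible_def by simp
  let ?C1 = "(\<lambda>i. (g^^i) a) ` {1..n}"
  note pieces = split_infinite_cycle[OF g X a n, folded gt_def]
  have "infinite (cycle_of g a)" using X a cycle_eq_cycle_of[of X g a] unfolding inf_cycles_def by auto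
  then show "a \<noteq> (g^^n) a" using infinite_cycle_funpow_eq_iff[OF g, of a 0 n] n by auto
  have "finite {S\<in>fin_cycles g. card S = n}" using adm n unfolding admissible_def by blast
  moreover have "{S\<in>insert ?C1 (fin_cycles g). card S = n} = insert ?C1 {S\<in>fin_cycles g. card S = n}"
    using pieces(3) by auto
  ultimately show "cycle_count gt n = Suc (cycle_count g n)"
    unfolding cycle_count_def pieces(1) using pieces(2) by simp
  have "{S\<in>insert ?C1 (fin_cycles g). card S = m} = {S\<in>fin_cycles g. card S = m}" if "m \<noteq> n" for m
    using pieces(3) that by auto
  then show "\<forall>m. m \<noteq> n \<longrightarrow> cycle_count gt m = cycle_count g m"
    unfolding cycle_count_def pieces(1) by simp
qed

lemma cycle_count_merge:
  fixes g :: "'a \<Rightarrow> 'a"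
  assumes adm: "admissible g" and X: "inf_cycles g = {X}" and A: "A \<in> fin_cycles g"
    and a: "a \<in> A" and b: "b \<in> X"
  defines "gt \<equiv> g \<circ> transpose a b"
  shows "a \<noteq> b" and "cycle_count gt (card A) = cycle_count g (card A) - 1"
    and "\<forall>m. m \<noteq> card A \<longrightarrow> cycle_count gt m = cycle_count g m"
proof -
  have g: "inj g" using adm unfolding admissible_def by simp
  note merged = merge_into_infinite_cycle[OF g X A a b, folded gt_def]
  show "a \<noteq> b"
  proof
    assume "a = b"
    have "A \<in> cycles g" "finite A" "X \<in> cycles g" "infinite X"
      using A X unfolding fin_cycles_def inf_cycles_def by auto
    then have "A = cycle_of g a" "X = cycle_of g a" "finite A" "infinite X"
      using cycle_eq_cycle_of[of A g a] cycle_eq_cycle_of[of X g a] a b \<open>a = b\<close> by auto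
    then show False by simp
  qed
  have "finite {S\<in>fin_cycles g. card S = card A}"
    using adm fin_cycles_card_pos[OF A] unfolding admissible_def by blast
  moreover have "{S\<in>fin_cycles g - {A}. card S = card A} = {S\<in>fin_cycles g. card S = card A} - {A}"
    by auto
  ultimately show "cycle_count gt (card A) = cycle_count g (card A) - 1"
    unfolding cycle_count_def merged(1) using A by (simp add: card_Diff_singleton)
  show "\<forall>m. m \<noteq> card A \<longrightarrow> cycle_count gt m = cycle_count g m"
    unfolding cycle_count_def merged(1) by (auto intro!: arg_cong[where f=card])
qed

definition count_distance :: "('a \<Rightarrow> 'a) \<Rightarrow> ('a \<Rightarrow> 'a) \<Rightarrow> nat" where
  "count_distance f g = (\<Sum>n\<in>count_diffs f g. nat \<bar>int (cycle_count f n) - int (cycle_count g n)\<bar>)"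

lemma closer_transposition:
  fixes f g :: "'a \<Rightarrow> 'a"
  assumes adm: "admissible g" and n: "n \<in> count_diffs f g"
  obtains a b where "a \<noteq> b" and "\<forall>m. m \<noteq> n \<longrightarrow> cycle_count (g \<circ> transpose a b) m = cycle_count g m"
    and "nat \<bar>int (cycle_count f n) - int (cycle_count (g \<circ> transpose a b) n)\<bar>
       = nat \<bar>int (cycle_count f n) - int (cycle_count g n)\<bar> - 1"
proof -
  have n0: "0 < n" and differ: "cycle_count f n \<noteq> cycle_count g n" using n unfolding count_diffs_def by auto
  obtain X where X: "inf_cycles g = {X}" using adm unfolding admissible_def by auto
  then have "X \<noteq> {}" unfolding inf_cycles_def by auto
  then obtain b where b: "b \<in> X" by blast
  show ?thesis
  proof (cases "cycle_count f n < cycle_count g n")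
    case True
    then have "{S\<in>fin_cycles g. card S = n} \<noteq> {}" unfolding cycle_count_def by (metis card.empty not_less0)
    then obtain A where A: "A \<in> fin_cycles g" "card A = n" by blast
    then obtain a where a: "a \<in> A" using fin_cycles_card_pos n0 by fastforce
    note merge = cycle_count_merge[OF adm X A(1) a b]
    show ?thesis using that[OF merge(1)] merge(2,3) A(2) True by auto
  next
    case False
    note split = cycle_count_split[OF adm X b n0]
    show ?thesis using that[OF split(1)] split(2,3) False differ by auto
  qed
qed

lemma count_distance_step:
  assumes fin: "finite (count_diffs f g)" and n: "n \<in> count_diffs f g"
    and others: "\<forall>m. m \<noteq> n \<longrightarrow> cycle_count g' m = cycle_count g m"
    and closer: "nat \<bar>int (cycle_count f n) - int (cycle_count g' n)\<bar>
       = nat \<bar>int (cycle_count f n) - int (cycle_count g n)\<bar> - 1"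
  shows "finite (count_diffs f g')" and "Suc (count_distance f g') = count_distance f g"
proof -
  let ?d = "\<lambda>h n. nat \<bar>int (cycle_count f n) - int (cycle_count h n)\<bar>"
  have sub: "count_diffs f g' \<subseteq> count_diffs f g" using others n unfolding count_diffs_def by auto
  then show fin': "finite (count_diffs f g')" using fin finite_subset by blast
  have pos: "0 < ?d g n" using n unfolding count_diffs_def by auto
  have "count_distance f g' = sum (?d g') (count_diffs f g)"
    unfolding count_distance_def
    by (rule sum.mono_neutral_left[OF fin sub]) (auto simp: count_diffs_def)
  also have "\<dots> = ?d g' n + sum (?d g') (count_diffs f g - {n})" using sum.remove[OF fin n] .
  also have "sum (?d g') (count_diffs f g - {n}) = sum (?d g) (count_diffs f g - {n})"
    using others by (intro sum.cong) auto
  also have "count_distance f g = ?d g n + sum (?d g) (count_diffs f g - {n})"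
    unfolding count_distance_def using sum.remove[OF fin n] .
  ultimately show "Suc (count_distance f g') = count_distance f g" using closer pos by simp
qed

lemma reach_same_counts:
  fixes f g :: "'a \<Rightarrow> 'a"
  assumes "admissible g" "finite (count_diffs f g)"
  shows "\<exists>q. swapidseq (count_distance f g) q \<and> (\<forall>n>0. cycle_count (g \<circ> q) n = cycle_count f n)"
  using assms
proof (induction "count_distance f g" arbitrary: g)
  case 0
  have "count_diffs f g = {}"
    using 0 unfolding count_distance_def count_diffs_def by (auto simp: sum_eq_0_iff)
  have "cycle_count f n = cycle_count g n" if "0 < n" for n
  proof (rule ccontr)
    assume "cycle_count f n \<noteq> cycle_count g n"
    then have "n \<in> count_diffs f g" using that unfolding count_diffs_def by simp
    then show False using \<open>count_diffs f g = {}\<close> by simp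
  qed
  then show ?case using 0 by (intro exI[of _ id]) (simp add: id_def)
next
  case (Suc m)
  have "count_diffs f g \<noteq> {}"
  proof
    assume "count_diffs f g = {}"
    then have "count_distance f g = 0" unfolding count_distance_def by simp
    then show False using Suc.hyps(2) by simp
  qed
  then obtain n where n: "n \<in> count_diffs f g" by blast
  obtain a b where ab: "a \<noteq> b"
    and others: "\<forall>m. m \<noteq> n \<longrightarrow> cycle_count (g \<circ> transpose a b) m = cycle_count g m"
    and closer: "nat \<bar>int (cycle_count f n) - int (cycle_count (g \<circ> transpose a b) n)\<bar>
       = nat \<bar>int (cycle_count f n) - int (cycle_count g n)\<bar> - 1"
    using closer_transposition[OF Suc.prems(1) n] by blast
  note dist = count_distance_step[OF Suc.prems(2) n others closer]
  have adm: "admissible (g \<circ> transpose a b)" using transposition_step[OF Suc.prems(1) ab] by blast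
  have "m = count_distance f (g \<circ> transpose a b)" using dist(2) Suc.hyps(2) by simp
  then obtain q where q: "swapidseq m q" "\<forall>n>0. cycle_count (g \<circ> transpose a b \<circ> q) n = cycle_count f n"
    using Suc.hyps(1)[OF _ adm dist(1)] by metis
  have "swapidseq (Suc m) (transpose a b \<circ> q)" by (rule swapidseq.comp_Suc[OF q(1) ab])
  then show ?case using q(2) Suc.hyps(2) by (intro exI[of _ "transpose a b \<circ> q"]) (simp add: comp_assoc)
qed

lemma even_sum_nat_abs:
  fixes z :: "nat \<Rightarrow> int"
  assumes "finite D"
  shows "even (\<Sum>n\<in>D. nat \<bar>z n\<bar>) \<longleftrightarrow> even (\<Sum>n\<in>D. z n)"
proof -
  have "odd (nat \<bar>k\<bar>) \<longleftrightarrow> odd k" for k :: int using even_nat_iff[of "\<bar>k\<bar>"] by simp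
  then show ?thesis using even_sum_iff[OF assms, of "\<lambda>n. nat \<bar>z n\<bar>"] even_sum_iff[OF assms, of z] by simp
qed

lemma conjugate_if_approx_even:
  fixes f g :: "'a \<Rightarrow> 'a"
  assumes f: "admissible f" and g: "admissible g" and approx: "approx_even f g"
  shows "\<exists>h h1 h2. bij h \<and> h1 \<in> Alt \<and> h2 \<in> Alt \<and> f = inv h \<circ> h2 \<circ> g \<circ> h1 \<circ> h"
proof -
  have fwd: "C_fwd f = C_fwd g" and fin: "finite (count_diffs f g)"
    and even: "even (\<Sum>n\<in>count_diffs f g. int (cycle_count f n) - int (cycle_count g n))"
    using approx unfolding approx_even_admissible[OF f g] by auto
  have even_dist: "even (count_distance f g)"
    unfolding count_distance_def using even even_sum_nat_abs[OF fin] by simp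
  obtain q where q: "swapidseq (count_distance f g) q" and counts: "\<forall>n>0. cycle_count (g \<circ> q) n = cycle_count f n"
    using reach_same_counts[OF g fin] by blast
  have gq: "admissible (g \<circ> q)" "C_fwd (g \<circ> q) = C_fwd g" using swapidseq_parity[OF q g] by auto
  obtain k where k: "bij k" "\<forall>x. k (f x) = (g \<circ> q) (k x)"
    using conjugate_if_same_counts[OF f gq(1)] counts fwd gq(2) by auto
  have "q \<in> Alt" unfolding Alt_def permutation_def using q evenperm_unique[OF q refl] even_dist by auto
  moreover have "id \<in> Alt" unfolding Alt_def by simp
  moreover have "f = inv k \<circ> id \<circ> g \<circ> q \<circ> k"
  proof
    fix x
    have "f x = inv k (k (f x))" using k(1) by (simp add: bij_is_inj)
    then show "f x = (inv k \<circ> id \<circ> g \<circ> q \<circ> k) x" using k(2) by simp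
  qed
  ultimately show ?thesis using k(1) by blast
qed

lemma admissibleI:
  assumes "inj f" "\<exists>!S. S \<in> cycles f \<and> infinite S" "\<forall>n>0. Cn n f \<noteq> \<infinity>"
  shows "admissible f"
proof -
  obtain X where "inf_cycles f = {X}" using assms(2) unfolding inf_cycles_def by auto
  moreover have "finite {S\<in>fin_cycles f. card S = n}" if "0 < n" for n
    using assms(3) that unfolding Cn_def ecard_def fin_cycles_def by (auto split: if_splits simp: conj_assoc)
  ultimately show ?thesis unfolding admissible_def using assms(1) by blast
qed

theorem mainTheorem18:
  fixes f g :: "'a::countable \<Rightarrow> 'a"
  assumes "infinite (UNIV :: 'a set)"
    and "inj f" and "inj g"
    and "\<exists>!S. S \<in> cycles f \<and> infinite S"
    and "\<exists>!S. S \<in> cycles g \<and> infinite S"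
    and "\<forall>n>0. Cn n f \<noteq> \<infinity>"
    and "\<forall>n>0. Cn n g \<noteq> \<infinity>"
  shows "approx_even f g \<longleftrightarrow>
    (\<exists>h h1 h2. bij h \<and> h1 \<in> Alt \<and> h2 \<in> Alt \<and> f = inv h \<circ> h2 \<circ> g \<circ> h1 \<circ> h)"
proof
  have f: "admissible f" using admissibleI[OF assms(2,4,6)] .
  have g: "admissible g" using admissibleI[OF assms(3,5,7)] .
  show "approx_even f g \<Longrightarrow> \<exists>h h1 h2. bij h \<and> h1 \<in> Alt \<and> h2 \<in> Alt \<and> f = inv h \<circ> h2 \<circ> g \<circ> h1 \<circ> h"
    by (rule conjugate_if_approx_even[OF f g])
  show "\<exists>h h1 h2. bij h \<and> h1 \<in> Alt \<and> h2 \<in> Alt \<and> f = inv h \<circ> h2 \<circ> g \<circ> h1 \<circ> h \<Longrightarrow> approx_even f g"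
    using approx_even_of_conjugate[OF g] by blast
qed

end
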